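(* Let $\mathbb{M}$ be a weight sequence with sequence of quotients $\mathbf{m}$. The following are equivalent: (i) $\mathbb{M}$ is strongly regular; (ii) there exists $k\in\mathbb{N}$, $k\ge2$, such that $1<\liminf_{p\to\infty}\frac{m_{kp}}{m_p}\le\limsup_{p\to\infty}\frac{m_{kp}}{m_p}<\infty$; (iii) $\alpha(\mathbf{m})<\infty$ and $\beta(\mathbf{m})>0$; (iv) $\mathbf{m}$ is O-regularly varying and $\beta(\mathbf{m})>0$; (v) $0<\liminf_{t\to\infty}\frac{\nu_{\mathbf{m}}(t)}{\omega_{\mathbb{M}}(t)}\le\limsup_{t\to\infty}\frac{\nu_{\mathbf{m}}(t)}{\omega_{\mathbb{M}}(t)}<\infty$; (vi) $\alpha(\nu_{\mathbf{m}})<\infty$ and $\beta(\nu_{\mathbf{m}})>0$; (vii) $\alpha(\omega_{\mathbb{M}})<\infty$ and $\beta(\omega_{\mathbb{M}})>0$. In this case, $\alpha(\omega_{\mathbb{M}})=\alpha(\nu_{\mathbf{m}})=1/\beta(\mathbf{m})$ and $\beta(\omega_{\mathbb{M}})=\beta(\nu_{\mathbf{m}})=1/\alpha(\mathbf{m})$.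
   Context: A weight sequence is $\mathbb{M}=(M_p)_{p\in\mathbb{N}_0}$ of positive reals with $M_0=1$, $M_p^2\le M_{p-1}M_{p+1}$ ($p\ge1$) and $M_p^{1/p}\to\infty$; $m_p=M_{p+1}/M_p$. $\mathbb{M}$ is strongly regular if it is logarithmically convex, has moderate growth (there is $A>0$ with $M_{p+q}\le A^{p+q}M_pM_q$ for all $p,q\in\mathbb{N}_0$) and satisfies strong nonquasianalyticity (there is $B>0$ with $\sum_{q\ge p}\frac{M_q}{(q+1)M_{q+1}}\le B\frac{M_p}{M_{p+1}}$ for all $p\in\mathbb{N}_0$). $\omega_{\mathbb{M}}(t):=\sup_{p\in\mathbb{N}_0}\log(t^p/M_p)$ for $t>0$, $\omega_{\mathbb{M}}(0)=0$; $\nu_{\mathbf{m}}(t):=\#\{j\in\mathbb{N}_0:m_j\le t\}$ for $t>0$. For a positive measurable $f$ on $[A,\infty)$: $\alpha(f):=\inf\{\alpha:\exists C_\alpha>0\ \forall\Lambda>1,\ \limsup_{x\to\infty}\sup_{\lambda\in[1,\Lambda]}\frac{f(\lambda x)}{\lambda^{\alpha}f(x)}\le C_\alpha\}$ and $\beta(f):=\sup\{\beta:\exists D_\beta>0\ \forall\Lambda>1,\ \liminf_{x\to\infty}\inf_{\lambda\in[1,\Lambda]}\frac{f(\lambda x)}{\lambda^{\beta}f(x)}\ge D_\beta\}$; for $\omega_{\mathbb{M}}$, $\nu_{\mathbf{m}}$ these are computed on any interval $[A,\infty)$ where the function is positive. For the sequence $\mathbf{m}$, $\alpha(\mathbf{m}),\beta(\mathbf{m})$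 are these indices of the step function $f(x)=m_{\lfloor x\rfloor-1}$, $x\ge1$, and $\mathbf{m}$ is O-regularly varying if $\limsup_{p\to\infty}m_{\lfloor\lambda p\rfloor}/m_p<\infty$ for every $\lambda\in(0,\infty)$. Conventions $1/0=\infty$, $1/\infty=0$. *)

theory Defs
  imports "HOL-Analysis.Analysis" "HOL-Library.Extended_Real" "HOL-Library.Liminf_Limsup"
begin

definition weight_seq :: "(nat \<Rightarrow> real) \<Rightarrow> bool" where
  "weight_seq M \<longleftrightarrow> M 0 = 1 \<and> (\<forall>p. 0 < M p)
     \<and> (\<forall>p\<ge>1. (M p)\<^sup>2 \<le> M (p - 1) * M (p + 1))
     \<and> filterlim (\<lambda>p. root p (M p)) at_top sequentially"

definition quot :: "(nat \<Rightarrow> real) \<Rightarrow> nat \<Rightarrow> real" where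
  "quot M p = M (Suc p) / M p"

definition log_convex :: "(nat \<Rightarrow> real) \<Rightarrow> bool" where
  "log_convex M \<longleftrightarrow> (\<forall>p\<ge>1. (M p)\<^sup>2 \<le> M (p - 1) * M (p + 1))"

definition moderate_growth :: "(nat \<Rightarrow> real) \<Rightarrow> bool" where
  "moderate_growth M \<longleftrightarrow> (\<exists>A>0. \<forall>p q. M (p + q) \<le> A ^ (p + q) * M p * M q)"

definition strongly_nonquasianalytic :: "(nat \<Rightarrow> real) \<Rightarrow> bool" where
  "strongly_nonquasianalytic M \<longleftrightarrow>
     summable (\<lambda>q. M q / ((real q + 1) * M (Suc q)))
     \<and> (\<exists>B>0. \<forall>p. (\<Sum>j. M (p + j) / ((real (p + j) + 1) * M (Suc (p + j))))
                     \<le> B * (M p / M (Suc p)))"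

definition strongly_regular :: "(nat \<Rightarrow> real) \<Rightarrow> bool" where
  "strongly_regular M \<longleftrightarrow> log_convex M \<and> moderate_growth M \<and> strongly_nonquasianalytic M"

definition omegaM :: "(nat \<Rightarrow> real) \<Rightarrow> real \<Rightarrow> real" where
  "omegaM M t = (if t = 0 then 0 else (SUP p. ln (t ^ p / M p)))"

definition nu_m :: "(nat \<Rightarrow> real) \<Rightarrow> real \<Rightarrow> real" where
  "nu_m m t = real (card {j. m j \<le> t})"

definition alpha_idx :: "(real \<Rightarrow> real) \<Rightarrow> ereal" where
  "alpha_idx f = Inf {ereal a | a. \<exists>C>0. \<forall>\<Lambda>>1.
      Limsup at_top (\<lambda>x. SUP l\<in>{1..\<Lambda>}. ereal (f (l * x) / (l powr a * f x))) \<le> ereal C}"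

definition beta_idx :: "(real \<Rightarrow> real) \<Rightarrow> ereal" where
  "beta_idx f = Sup {ereal b | b. \<exists>D>0. \<forall>\<Lambda>>1.
      Liminf at_top (\<lambda>x. INF l\<in>{1..\<Lambda>}. ereal (f (l * x) / (l powr b * f x))) \<ge> ereal D}"

definition seq_step :: "(nat \<Rightarrow> real) \<Rightarrow> real \<Rightarrow> real" where
  "seq_step m x = m (nat \<lfloor>x\<rfloor> - 1)"

definition O_reg_var :: "(nat \<Rightarrow> real) \<Rightarrow> bool" where
  "O_reg_var m \<longleftrightarrow> (\<forall>l>0. Limsup sequentially (\<lambda>p. ereal (m (nat \<lfloor>l * real p\<rfloor>) / m p)) < \<infinity>)"

end

(* The indices of a positive function f are governed by the power bounds
   f (l x) <= C l^a f x and f (l x) >= D l^b f x for l >= 1 and large x: alpha f is the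
   infimum of the admissible a and beta f the supremum of the admissible b.  For the step
   function of m these are bounds m_j <= C ((j+1)/(k+1))^a m_k (resp. >=) on the quotients.
   The upper bound is equivalent to m_(2k+1) <= K m_k, i.e. to moderate growth; the lower bound
   with b > 0 is equivalent to m_(kp) >= 2 m_p for some k >= 2, i.e. to strong
   nonquasianalyticity (compare the tails of sum 1/((q+1) m_q) block by block on
   [k^i p, k^(i+1) p)).  As nu_m is the inverse function of j |-> m_j, an upper bound with
   exponent a for m is a lower bound with exponent 1/a for nu_m and vice versa, which gives the
   reciprocal relations between the indices.  Finally omega_M (l t) - omega_M t lies between
   nu_m t ln l and nu_m (l t) ln l, so nu_m and omega_M are comparable exactly when one (and
   then both) of them has finite upper and positive lower index, and comparable functions have
   the same indices. *)

theory Submission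
  imports Defs "HOL-Library.Landau_Symbols"
begin

lemma powr_le_iff_le_powr_inverse:
  fixes x y b :: real
  assumes "0 < x" "0 < y" "0 < b"
  shows "x powr b \<le> y \<longleftrightarrow> x \<le> y powr (1 / b)"
proof
  assume "x powr b \<le> y"
  then have "(x powr b) powr (1 / b) \<le> y powr (1 / b)" using assms by (intro powr_mono2) auto
  then show "x \<le> y powr (1 / b)" using assms by (simp add: powr_powr)
next
  assume "x \<le> y powr (1 / b)"
  then have "x powr b \<le> (y powr (1 / b)) powr b" using assms by (intro powr_mono2) auto
  then show "x powr b \<le> y" using assms by (simp add: powr_powr)
qed

lemma le_powr_iff_powr_inverse_le:
  fixes x y b :: real
  assumes "0 < x" "0 < y" "0 < b"
  shows "y \<le> x powr b \<longleftrightarrow> y powr (1 / b) \<le> x"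
proof
  assume "y \<le> x powr b"
  then have "y powr (1 / b) \<le> (x powr b) powr (1 / b)" using assms by (intro powr_mono2) auto
  then show "y powr (1 / b) \<le> x" using assms by (simp add: powr_powr)
next
  assume "y powr (1 / b) \<le> x"
  then have "(y powr (1 / b)) powr b \<le> x powr b" using assms by (intro powr_mono2) auto
  then show "y \<le> x powr b" using assms by (simp add: powr_powr)
qed

lemma powr_divide_eq_powr_minus_mult:
  fixes x y c :: real
  shows "(y / x) powr c = x powr (- c) * y powr c"
  unfolding powr_divide powr_minus by (simp add: divide_inverse)

lemma prod_ratio_eq_binomial:
  "(\<Prod>i<q. (real p + real i + 1) / (real i + 1)) = real ((p + q) choose q)"
proof (induction q)
  case (Suc q)
  have "real (Suc q) * real ((p + Suc q) choose Suc q) = real (Suc (p + q)) * real ((p + q) choose q)"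
    using Suc_times_binomial[of q "p + q"] by (metis add_Suc_right of_nat_mult)
  then show ?case using Suc by (simp add: field_simps)
qed simp

lemma sum_lessThan_shift:
  fixes f :: "nat \<Rightarrow> 'a::comm_monoid_add"
  shows "(\<Sum>j<L. f (p + j)) = (\<Sum>q\<in>{p..<p + L}. f q)"
  using sum.shift_bounds_nat_ivl[of f 0 p L] by (simp add: atLeast0LessThan add.commute)

lemma harmonic_sum_doubling_blocks:
  fixes p :: nat
  assumes "p \<ge> 1"
  shows "real n / 2 \<le> (\<Sum>q\<in>{p..<2 ^ n * p}. 1 / (real q + 1))"
proof (induction n)
  case (Suc n)
  have block: "1 / 2 \<le> (\<Sum>q\<in>{2 ^ n * p..<2 ^ Suc n * p}. 1 / (real q + 1))"
  proof -
    have "1 / real (2 ^ Suc n * p) \<le> 1 / (real q + 1)" if "q \<in> {2 ^ n * p..<2 ^ Suc n * p}" for q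
    proof -
      have "q + 1 \<le> 2 ^ Suc n * p" using that by simp
      then have "real q + 1 \<le> real (2 ^ Suc n * p)"
        using of_nat_mono[where 'a=real] by (simp only: of_nat_add of_nat_1)
      then show ?thesis using assms by (intro divide_left_mono) auto
    qed
    then have "real (card {2 ^ n * p..<2 ^ Suc n * p}) * (1 / real (2 ^ Suc n * p))
        \<le> (\<Sum>q\<in>{2 ^ n * p..<2 ^ Suc n * p}. 1 / (real q + 1))"
      by (intro sum_bounded_below) auto
    moreover have "real (card {2 ^ n * p..<2 ^ Suc n * p}) * (1 / real (2 ^ Suc n * p)) = 1 / 2"
      using assms by simp
    ultimately show ?thesis by linarith
  qed
  have "p \<le> 2 ^ n * p" "2 ^ n * p \<le> 2 ^ Suc n * p" by simp_all
  then have "(\<Sum>q\<in>{p..<2 ^ Suc n * p}. 1 / (real q + 1)) =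
      (\<Sum>q\<in>{p..<2 ^ n * p}. 1 / (real q + 1)) + (\<Sum>q\<in>{2 ^ n * p..<2 ^ Suc n * p}. 1 / (real q + 1))"
    by (simp add: sum.atLeastLessThan_concat)
  then show ?case using Suc block by simp
qed simp

lemma pow_le_exp_mult_fact: "(real N + 1) ^ N \<le> exp (real N) * fact N"
proof (induction N)
  case (Suc N)
  define x where "x = 1 / (real N + 1)"
  have "x \<ge> 0" unfolding x_def by simp
  have "(1 + x) ^ Suc N \<le> exp x ^ Suc N" using \<open>x \<ge> 0\<close> by (intro power_mono) auto
  also have "\<dots> = exp 1" unfolding exp_of_nat_mult[symmetric] x_def by simp
  finally have e: "(1 + x) ^ Suc N \<le> exp 1" .
  have "real N + 2 = (1 + x) * (real N + 1)" unfolding x_def by (simp add: field_simps)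
  then have "(real (Suc N) + 1) ^ Suc N = (1 + x) ^ Suc N * ((real N + 1) * (real N + 1) ^ N)"
    by (simp add: power_mult_distrib add.commute)
  also have "\<dots> \<le> exp 1 * ((real N + 1) * (exp (real N) * fact N))"
    using e Suc \<open>x \<ge> 0\<close> by (intro mult_mono) auto
  also have "\<dots> = exp (real (Suc N)) * fact (Suc N)" by (simp add: exp_add[symmetric] add.commute mult_ac)
  finally show ?case .
qed simp

lemma sum_ln_ratio_le: "(\<Sum>j<N. ln ((real N + 1) / (real j + 1))) \<le> real N"
proof -
  have "(\<Sum>j<N. ln ((real N + 1) / (real j + 1))) = ln (\<Prod>j<N. (real N + 1) / (real j + 1))"
    by (subst ln_prod) auto
  also have "(\<Prod>j<N. (real N + 1) / (real j + 1)) = (real N + 1) ^ N / fact N"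
  proof -
    have "(\<Prod>j<N. real j + 1) = fact N" by (simp add: fact_prod_Suc add.commute atLeast0LessThan)
    then show ?thesis by (simp add: prod_dividef)
  qed
  also have "ln ((real N + 1) ^ N / fact N) \<le> ln (exp (real N))"
    using pow_le_exp_mult_fact[of N] by (subst ln_le_cancel_iff) (auto simp: divide_le_eq)
  finally show ?thesis by simp
qed

section \<open>Power bounds and the indices \<open>\<alpha>\<close> and \<open>\<beta>\<close>\<close>

lemma eventually_at_top_positiveE:
  fixes P :: "real \<Rightarrow> bool"
  assumes "eventually P at_top"
  obtains x0 where "x0 > 0" "\<And>x. x \<ge> x0 \<Longrightarrow> P x"
proof -
  obtain N where "\<And>x. x \<ge> N \<Longrightarrow> P x" using assms unfolding eventually_at_top_linorder by blast
  then show ?thesis using that[of "max N 1"] by simp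
qed

lemma eventually_pos_on_rays:
  fixes f :: "real \<Rightarrow> real"
  assumes "eventually (\<lambda>x. f x > 0) at_top"
  shows "eventually (\<lambda>x. f x > 0 \<and> (\<forall>l\<ge>1. f (l * x) > 0)) at_top"
proof -
  obtain x0 where "x0 > 0" "\<And>x. x \<ge> x0 \<Longrightarrow> f x > 0"
    using assms by (rule eventually_at_top_positiveE) blast
  then show ?thesis
    unfolding eventually_at_top_linorder
    by (intro exI[of _ x0]) (smt (verit, best) mult_le_cancel_right1)
qed

definition grows_at_most :: "(real \<Rightarrow> real) \<Rightarrow> real \<Rightarrow> bool" where
  "grows_at_most f a \<longleftrightarrow>
     (\<exists>C>0. eventually (\<lambda>x. \<forall>l\<ge>1. f (l * x) \<le> C * l powr a * f x) at_top)"

definition grows_at_least :: "(real \<Rightarrow> real) \<Rightarrow> real \<Rightarrow> bool" where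
  "grows_at_least f b \<longleftrightarrow>
     (\<exists>D>0. eventually (\<lambda>x. \<forall>l\<ge>1. D * l powr b * f x \<le> f (l * x)) at_top)"

lemma power_bound_iterate:
  fixes f :: "real \<Rightarrow> real"
  assumes L: "L > 1" and x0: "x0 > 0"
    and local: "\<And>x l. x \<ge> x0 \<Longrightarrow> 1 \<le> l \<Longrightarrow> l \<le> L \<Longrightarrow> f (l * x) \<le> K * l powr a * f x"
    and step: "\<And>x. x \<ge> x0 \<Longrightarrow> f (L * x) \<le> L powr a * f x"
    and x: "x \<ge> x0" and l: "l \<ge> 1"
  shows "f (l * x) \<le> K * l powr a * f x"
proof -
  have "f (l * x) \<le> K * l powr a * f x" if "x \<ge> x0" "1 \<le> l" "l \<le> L ^ Suc n" for n x l
    using that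
  proof (induction n arbitrary: l)
    case 0
    then show ?case using local by simp
  next
    case (Suc n)
    show ?case
    proof (cases "l \<le> L ^ Suc n")
      case True
      then show ?thesis using Suc by blast
    next
      case False
      define l' where "l' = l / L"
      have "L \<le> L ^ Suc n" using L by (simp add: less_imp_le)
      then have "L < l" using False by linarith
      then have l': "1 \<le> l'" "l' \<le> L ^ Suc n"
        using Suc.prems L by (auto simp: l'_def field_simps)
      have "f (l * x) = f (L * (l' * x))" using L by (simp add: l'_def)
      also have "\<dots> \<le> L powr a * f (l' * x)"
        using step Suc.prems l' x0 by (smt (verit) mult_le_cancel_right1)
      also have "\<dots> \<le> L powr a * (K * l' powr a * f x)"
        using Suc.IH Suc.prems l' by (intro mult_left_mono) auto
      also have "\<dots> = K * (L * l') powr a * f x" using L l' by (simp add: powr_mult)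
      also have "L * l' = l" using L by (simp add: l'_def)
      finally show ?thesis .
    qed
  qed
  moreover obtain n where "l < L ^ n" using real_arch_pow[OF L] by blast
  then have "l \<le> L ^ Suc n" using L by (smt (verit) one_le_power power_Suc mult_le_cancel_right1)
  ultimately show ?thesis using x l by blast
qed

lemma one_le_powr_abs_mult_powr:
  fixes l L a :: real
  assumes "1 \<le> l" "l \<le> L"
  shows "1 \<le> L powr \<bar>a\<bar> * l powr a"
proof -
  have "1 \<le> l powr (\<bar>a\<bar> + a)" using assms by (intro ge_one_powr_ge_zero) auto
  also have "\<dots> = l powr \<bar>a\<bar> * l powr a" using assms by (simp add: powr_add)
  also have "\<dots> \<le> L powr \<bar>a\<bar> * l powr a" using assms by (intro mult_right_mono powr_mono2) auto
  finally show ?thesis .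
qed

lemma powr_le_powr_abs:
  fixes l L a :: real
  assumes "1 \<le> l" "l \<le> L"
  shows "l powr a \<le> L powr \<bar>a\<bar>"
  using assms by (meson abs_ge_self order.trans powr_mono powr_mono2 zero_le_one order_trans abs_ge_zero)

lemma grows_at_most_of_step:
  fixes f :: "real \<Rightarrow> real"
  assumes L: "L > 1" and pos: "eventually (\<lambda>x. f x > 0) at_top"
    and local: "eventually (\<lambda>x. \<forall>l\<in>{1..L}. f (l * x) \<le> K * f x) at_top"
    and step: "eventually (\<lambda>x. f (L * x) \<le> L powr a * f x) at_top"
  shows "grows_at_most f a"
proof -
  define K' where "K' = max K 1 * L powr \<bar>a\<bar>"
  obtain x0 where x0: "x0 > 0" and
    bounds: "\<And>x. x \<ge> x0 \<Longrightarrow> f x > 0 \<and> (\<forall>l\<in>{1..L}. f (l * x) \<le> K * f x) \<and> f (L * x) \<le> L powr a * f x"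
    using eventually_conj[OF pos eventually_conj[OF local step]]
    by (rule eventually_at_top_positiveE) blast
  have "f (l * x) \<le> K' * l powr a * f x" if "x \<ge> x0" "1 \<le> l" "l \<le> L" for x l
  proof -
    have "f (l * x) \<le> max K 1 * f x" using bounds[OF \<open>x \<ge> x0\<close>] that
      by (smt (verit) atLeastAtMost_iff mult_right_mono)
    also have "\<dots> \<le> max K 1 * (L powr \<bar>a\<bar> * l powr a) * f x"
    proof (rule mult_right_mono)
      show "max K 1 \<le> max K 1 * (L powr \<bar>a\<bar> * l powr a)"
        using one_le_powr_abs_mult_powr[of l L a] that by (simp add: mult_le_cancel_left1)
    qed (use bounds[OF \<open>x \<ge> x0\<close>] in simp)
    finally show ?thesis by (simp add: K'_def mult_ac)
  qed
  then have "f (l * x) \<le> K' * l powr a * f x" if "x \<ge> x0" "1 \<le> l" for x l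
    using power_bound_iterate[OF L x0] bounds that by blast
  moreover have "K' > 0" using L by (simp add: K'_def)
  ultimately show ?thesis
    unfolding grows_at_most_def eventually_at_top_linorder by blast
qed

lemma grows_at_most_of_local_bounds:
  fixes f :: "real \<Rightarrow> real"
  assumes pos: "eventually (\<lambda>x. f x > 0) at_top" and K: "K > 0" and "a < a'"
    and local: "\<And>L. L > 1 \<Longrightarrow>
      eventually (\<lambda>x. \<forall>l\<in>{1..L}. f (l * x) \<le> K * l powr a * f x) at_top"
  shows "grows_at_most f a'"
proof -
  define L where "L = max K 1 powr (1 / (a' - a)) + 1"
  have L: "L > 1" unfolding L_def by simp
  have "K \<le> max K 1" by simp
  also have "\<dots> = (max K 1 powr (1 / (a' - a))) powr (a' - a)"
    using \<open>a < a'\<close> by (simp add: powr_powr)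
  also have "\<dots> \<le> L powr (a' - a)" using \<open>a < a'\<close> by (intro powr_mono2) (auto simp: L_def)
  finally have KL: "K \<le> L powr (a' - a)" .
  show ?thesis
  proof (rule grows_at_most_of_step[OF L pos])
    show "eventually (\<lambda>x. \<forall>l\<in>{1..L}. f (l * x) \<le> (K * L powr \<bar>a\<bar>) * f x) at_top"
      using eventually_conj[OF local[OF L] pos]
    proof eventually_elim
      case (elim x)
      show ?case
      proof
        fix l assume l: "l \<in> {1..L}"
        have "f (l * x) \<le> K * l powr a * f x" using elim l by blast
        also have "\<dots> \<le> K * L powr \<bar>a\<bar> * f x"
          using l elim K powr_le_powr_abs[of l L a] by (intro mult_right_mono mult_left_mono) auto
        finally show "f (l * x) \<le> (K * L powr \<bar>a\<bar>) * f x" .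
      qed
    qed
    show "eventually (\<lambda>x. f (L * x) \<le> L powr a' * f x) at_top"
      using eventually_conj[OF local[OF L] pos]
    proof eventually_elim
      case (elim x)
      then have "f (L * x) \<le> K * L powr a * f x" using L by auto
      also have "\<dots> \<le> L powr (a' - a) * L powr a * f x"
        using KL elim by (intro mult_right_mono) auto
      also have "\<dots> = L powr a' * f x" using L by (simp add: powr_add[symmetric])
      finally show ?case .
    qed
  qed
qed

lemma power_bound_inverse_iff:
  fixes u v c l b :: real
  assumes "u > 0" "v > 0" "c > 0" "l > 0"
  shows "c * l powr b * v \<le> u \<longleftrightarrow> inverse u \<le> inverse c * l powr (- b) * inverse v"
  using assms by (simp add: powr_minus field_simps)

lemma grows_at_least_iff_inverse:
  fixes f :: "real \<Rightarrow> real"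
  assumes pos: "eventually (\<lambda>x. f x > 0) at_top"
  shows "grows_at_least f b \<longleftrightarrow> grows_at_most (\<lambda>x. inverse (f x)) (- b)"
proof -
  have rays: "eventually (\<lambda>x. f x > 0 \<and> (\<forall>l\<ge>1. f (l * x) > 0)) at_top"
    using eventually_pos_on_rays[OF pos] .
  have bound_iff: "eventually (\<lambda>x. \<forall>l\<ge>1. c * l powr b * f x \<le> f (l * x)) at_top \<longleftrightarrow>
      eventually (\<lambda>x. \<forall>l\<ge>1. inverse (f (l * x)) \<le> inverse c * l powr (- b) * inverse (f x)) at_top"
    if "c > 0" for c
    using that by (intro eventually_subst[OF eventually_mono[OF rays]])
      (auto simp: power_bound_inverse_iff)
  show ?thesis
  proof
    assume "grows_at_least f b"
    then obtain D where "D > 0" "eventually (\<lambda>x. \<forall>l\<ge>1. D * l powr b * f x \<le> f (l * x)) at_top"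
      unfolding grows_at_least_def by blast
    then show "grows_at_most (\<lambda>x. inverse (f x)) (- b)"
      unfolding grows_at_most_def using bound_iff[of D] by (intro exI[of _ "inverse D"]) auto
  next
    assume "grows_at_most (\<lambda>x. inverse (f x)) (- b)"
    then obtain C where "C > 0"
      "eventually (\<lambda>x. \<forall>l\<ge>1. inverse (f (l * x)) \<le> C * l powr (- b) * inverse (f x)) at_top"
      unfolding grows_at_most_def by blast
    then show "grows_at_least f b"
      unfolding grows_at_least_def using bound_iff[of "inverse C"]
      by (intro exI[of _ "inverse C"]) auto
  qed
qed

lemma grows_at_least_of_local_bounds:
  fixes f :: "real \<Rightarrow> real"
  assumes pos: "eventually (\<lambda>x. f x > 0) at_top" and D: "D > 0" and "b' < b"
    and local: "\<And>L. L > 1 \<Longrightarrow>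
      eventually (\<lambda>x. \<forall>l\<in>{1..L}. D * l powr b * f x \<le> f (l * x)) at_top"
  shows "grows_at_least f b'"
proof -
  have "grows_at_most (\<lambda>x. inverse (f x)) (- b')"
  proof (rule grows_at_most_of_local_bounds)
    show "eventually (\<lambda>x. inverse (f x) > 0) at_top" using pos by eventually_elim simp
    show "inverse D > 0" "- b < - b'" using D \<open>b' < b\<close> by auto
    fix L :: real assume "L > 1"
    show "eventually (\<lambda>x. \<forall>l\<in>{1..L}.
        inverse (f (l * x)) \<le> inverse D * l powr (- b) * inverse (f x)) at_top"
      using eventually_conj[OF local[OF \<open>L > 1\<close>] eventually_pos_on_rays[OF pos]]
      by eventually_elim (use D in \<open>auto simp: power_bound_inverse_iff[symmetric]\<close>)
  qed
  then show ?thesis using grows_at_least_iff_inverse[OF pos] by simp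
qed

lemma grows_at_most_mono:
  fixes f :: "real \<Rightarrow> real"
  assumes "grows_at_most f a" "a \<le> a'" and pos: "eventually (\<lambda>x. f x > 0) at_top"
  shows "grows_at_most f a'"
proof -
  obtain C where C: "C > 0" and ev: "eventually (\<lambda>x. \<forall>l\<ge>1. f (l * x) \<le> C * l powr a * f x) at_top"
    using assms(1) unfolding grows_at_most_def by blast
  have "eventually (\<lambda>x. \<forall>l\<ge>1. f (l * x) \<le> C * l powr a' * f x) at_top"
    using eventually_conj[OF ev pos]
  proof eventually_elim
    case (elim x)
    show ?case
    proof (intro allI impI)
      fix l :: real assume "l \<ge> 1"
      then have "f (l * x) \<le> C * l powr a * f x" using elim by blast
      also have "\<dots> \<le> C * l powr a' * f x"
        using \<open>l \<ge> 1\<close> \<open>a \<le> a'\<close> C elim by (intro mult_right_mono mult_left_mono powr_mono) auto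
      finally show "f (l * x) \<le> C * l powr a' * f x" .
    qed
  qed
  then show ?thesis using C unfolding grows_at_most_def by blast
qed

lemma grows_at_least_le_grows_at_most:
  fixes f :: "real \<Rightarrow> real"
  assumes pos: "eventually (\<lambda>x. f x > 0) at_top"
    and "grows_at_most f a" "grows_at_least f b"
  shows "b \<le> a"
proof (rule ccontr)
  assume "\<not> b \<le> a"
  obtain C where C: "C > 0" and up: "eventually (\<lambda>x. \<forall>l\<ge>1. f (l * x) \<le> C * l powr a * f x) at_top"
    using assms(2) unfolding grows_at_most_def by blast
  obtain D where D: "D > 0" and lo: "eventually (\<lambda>x. \<forall>l\<ge>1. D * l powr b * f x \<le> f (l * x)) at_top"
    using assms(3) unfolding grows_at_least_def by blast
  obtain X where X: "f X > 0" "\<forall>l\<ge>1. f (l * X) \<le> C * l powr a * f X"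
    "\<forall>l\<ge>1. D * l powr b * f X \<le> f (l * X)"
    using eventually_happens'[OF _ eventually_conj[OF pos eventually_conj[OF up lo]]] by auto
  define l where "l = (C / D + 1) powr (1 / (b - a))"
  have l: "l \<ge> 1" unfolding l_def using C D \<open>\<not> b \<le> a\<close> by (intro ge_one_powr_ge_zero) auto
  have "D * l powr b * f X \<le> C * l powr a * f X" using X l by (meson order.trans)
  then have "D * l powr b \<le> C * l powr a" using X by simp
  then have "l powr (b - a) \<le> C / D" using D l by (simp add: powr_diff field_simps)
  moreover have "l powr (b - a) = C / D + 1" unfolding l_def using \<open>\<not> b \<le> a\<close> C D by (simp add: powr_powr)
  ultimately show False by simp
qed

lemma bigtheta_iff_bounds:
  fixes f h :: "real \<Rightarrow> real"
  assumes f: "eventually (\<lambda>x. f x > 0) at_top" and h: "eventually (\<lambda>x. h x > 0) at_top"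
  shows "f \<in> \<Theta>(h) \<longleftrightarrow>
    (\<exists>c>0. \<exists>C>0. eventually (\<lambda>x. c * h x \<le> f x \<and> f x \<le> C * h x) at_top)"
proof
  assume "f \<in> \<Theta>(h)"
  then have "f \<in> O(h)" "f \<in> \<Omega>(h)" unfolding bigtheta_def by auto
  obtain C where "C > 0" and up: "eventually (\<lambda>x. norm (f x) \<le> C * norm (h x)) at_top"
    using \<open>f \<in> O(h)\<close> by (elim landau_o.bigE)
  obtain c where "c > 0" and lo: "eventually (\<lambda>x. norm (f x) \<ge> c * norm (h x)) at_top"
    using \<open>f \<in> \<Omega>(h)\<close> by (elim landau_omega.bigE)
  have "eventually (\<lambda>x. c * h x \<le> f x \<and> f x \<le> C * h x) at_top"
    using f h up lo by eventually_elim simp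
  then show "\<exists>c>0. \<exists>C>0. eventually (\<lambda>x. c * h x \<le> f x \<and> f x \<le> C * h x) at_top"
    using \<open>c > 0\<close> \<open>C > 0\<close> by blast
next
  assume "\<exists>c>0. \<exists>C>0. eventually (\<lambda>x. c * h x \<le> f x \<and> f x \<le> C * h x) at_top"
  then obtain c C where "c > 0" "C > 0" and ev: "eventually (\<lambda>x. c * h x \<le> f x \<and> f x \<le> C * h x) at_top"
    by blast
  have "eventually (\<lambda>x. c * norm (h x) \<le> norm (f x) \<and> norm (f x) \<le> C * norm (h x)) at_top"
    using f h ev by eventually_elim simp
  then show "f \<in> \<Theta>(h)" using \<open>c > 0\<close> \<open>C > 0\<close> by (rule bigthetaI'[rotated 2])
qed

lemma bigtheta_iff_Liminf_Limsup:
  fixes f g :: "real \<Rightarrow> real"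
  assumes f: "eventually (\<lambda>x. f x > 0) at_top" and g: "eventually (\<lambda>x. g x > 0) at_top"
  shows "f \<in> \<Theta>(g) \<longleftrightarrow>
    0 < Liminf at_top (\<lambda>x. ereal (f x / g x)) \<and>
    Liminf at_top (\<lambda>x. ereal (f x / g x)) \<le> Limsup at_top (\<lambda>x. ereal (f x / g x)) \<and>
    Limsup at_top (\<lambda>x. ereal (f x / g x)) < \<infinity>"
  (is "_ \<longleftrightarrow> 0 < ?Li \<and> ?Li \<le> ?Ls \<and> ?Ls < \<infinity>")
  unfolding bigtheta_iff_bounds[OF f g]
proof
  assume "\<exists>c>0. \<exists>C>0. eventually (\<lambda>x. c * g x \<le> f x \<and> f x \<le> C * g x) at_top"
  then obtain c C where "c > 0" "C > 0" and bounds: "eventually (\<lambda>x. c * g x \<le> f x \<and> f x \<le> C * g x) at_top"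
    by blast
  have ev: "eventually (\<lambda>x. c \<le> f x / g x \<and> f x / g x \<le> C) at_top"
    using bounds g by eventually_elim (auto simp: field_simps)
  have Li: "ereal c \<le> ?Li" using ev by (intro Liminf_bounded) (auto elim: eventually_mono)
  have Ls: "?Ls \<le> ereal C" using ev by (intro Limsup_bounded) (auto elim: eventually_mono)
  have "0 < ?Li" using less_le_trans[OF _ Li, of 0] \<open>c > 0\<close> by simp
  moreover have "?Li \<le> ?Ls" by (intro Liminf_le_Limsup) simp
  moreover have "?Ls < \<infinity>" using le_less_trans[OF Ls, of \<infinity>] by simp
  ultimately show "0 < ?Li \<and> ?Li \<le> ?Ls \<and> ?Ls < \<infinity>" by blast
next
  assume "0 < ?Li \<and> ?Li \<le> ?Ls \<and> ?Ls < \<infinity>"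
  then obtain r R where "0 < ereal r" "ereal r < ?Li" "?Ls < ereal R"
    using ereal_dense2[of 0 ?Li] ereal_dense2[of ?Ls \<infinity>] by blast
  have "eventually (\<lambda>x. ereal r < ereal (f x / g x) \<and> ereal (f x / g x) < ereal R \<and> g x > 0) at_top"
    by (intro eventually_conj less_LiminfD[OF \<open>ereal r < ?Li\<close>] Limsup_lessD[OF \<open>?Ls < ereal R\<close>] g)
  then have "eventually (\<lambda>x. r * g x \<le> f x \<and> f x \<le> R * g x) at_top"
    by eventually_elim (auto simp: field_simps)
  moreover have "r > 0" using \<open>0 < ereal r\<close> by simp
  moreover have "ereal r < ereal R"
    using \<open>ereal r < ?Li\<close> Liminf_le_Limsup[of at_top] \<open>?Ls < ereal R\<close>
    by (meson less_le_trans order.strict_trans trivial_limit_at_top_linorder)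
  then have "R > 0" using \<open>r > 0\<close> by simp
  ultimately show "\<exists>c>0. \<exists>C>0. eventually (\<lambda>x. c * g x \<le> f x \<and> f x \<le> C * g x) at_top"
    by blast
qed

lemma grows_at_most_bigtheta:
  fixes f h :: "real \<Rightarrow> real"
  assumes "f \<in> \<Theta>(h)" and f: "eventually (\<lambda>x. f x > 0) at_top" and h: "eventually (\<lambda>x. h x > 0) at_top"
    and "grows_at_most h a"
  shows "grows_at_most f a"
proof -
  obtain c C where "c > 0" "C > 0" and cmp: "eventually (\<lambda>x. c * h x \<le> f x \<and> f x \<le> C * h x) at_top"
    using assms(1) bigtheta_iff_bounds[OF f h] by blast
  obtain C0 where "C0 > 0" and ev: "eventually (\<lambda>x. \<forall>l\<ge>1. h (l * x) \<le> C0 * l powr a * h x) at_top"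
    using assms(4) unfolding grows_at_most_def by blast
  obtain x0 where "x0 > 0" and
    x0: "\<And>x. x \<ge> x0 \<Longrightarrow> (c * h x \<le> f x \<and> f x \<le> C * h x) \<and> (\<forall>l\<ge>1. h (l * x) \<le> C0 * l powr a * h x)"
    using eventually_conj[OF cmp ev] by (rule eventually_at_top_positiveE) blast
  have "f (l * x) \<le> (C * C0 / c) * l powr a * f x" if "x \<ge> x0" "l \<ge> 1" for x l
  proof -
    have "l * x \<ge> x0" using that \<open>x0 > 0\<close> by (smt (verit) mult_le_cancel_right1)
    then have "f (l * x) \<le> C * h (l * x)" using x0 by blast
    also have "\<dots> \<le> C * (C0 * l powr a * h x)" using x0 that \<open>C > 0\<close> by (intro mult_left_mono) auto
    also have "\<dots> \<le> C * (C0 * l powr a * (f x / c))"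
      using x0[OF \<open>x \<ge> x0\<close>] \<open>c > 0\<close> \<open>C > 0\<close> \<open>C0 > 0\<close>
      by (intro mult_left_mono) (auto simp: field_simps)
    also have "\<dots> = (C * C0 / c) * l powr a * f x" by simp
    finally show ?thesis .
  qed
  then have "eventually (\<lambda>x. \<forall>l\<ge>1. f (l * x) \<le> (C * C0 / c) * l powr a * f x) at_top"
    unfolding eventually_at_top_linorder by blast
  moreover have "C * C0 / c > 0" using \<open>c > 0\<close> \<open>C > 0\<close> \<open>C0 > 0\<close> by simp
  ultimately show ?thesis unfolding grows_at_most_def by blast
qed

lemma grows_at_least_bigtheta:
  fixes f h :: "real \<Rightarrow> real"
  assumes "f \<in> \<Theta>(h)" and f: "eventually (\<lambda>x. f x > 0) at_top" and h: "eventually (\<lambda>x. h x > 0) at_top"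
    and "grows_at_least h b"
  shows "grows_at_least f b"
proof -
  have f': "eventually (\<lambda>x. inverse (f x) > 0) at_top" using f by eventually_elim simp
  have h': "eventually (\<lambda>x. inverse (h x) > 0) at_top" using h by eventually_elim simp
  have "(\<lambda>x. inverse (f x)) \<in> \<Theta>(\<lambda>x. inverse (h x))"
    using landau_theta.inverse[of h at_top f] assms(1) f h
    by (auto simp: bigtheta_sym elim: eventually_mono)
  then show ?thesis
    using grows_at_most_bigtheta[OF _ f' h'] assms(4)
    by (simp add: grows_at_least_iff_inverse[OF f] grows_at_least_iff_inverse[OF h])
qed

lemma Limsup_bound_imp_local_bound:
  fixes f :: "real \<Rightarrow> real"
  assumes "C > 0" and pos: "eventually (\<lambda>x. f x > 0) at_top"
    and "Limsup at_top (\<lambda>x. SUP l\<in>{1..L}. ereal (f (l * x) / (l powr a * f x))) \<le> ereal C"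
  shows "eventually (\<lambda>x. \<forall>l\<in>{1..L}. f (l * x) \<le> 2 * C * l powr a * f x) at_top"
proof -
  have "Limsup at_top (\<lambda>x. SUP l\<in>{1..L}. ereal (f (l * x) / (l powr a * f x))) < ereal (2 * C)"
    using assms(1,3) by (simp add: le_less_trans)
  then have "eventually (\<lambda>x. (SUP l\<in>{1..L}. ereal (f (l * x) / (l powr a * f x))) < ereal (2 * C)) at_top"
    by (rule Limsup_lessD)
  then show ?thesis using pos
  proof eventually_elim
    case (elim x)
    show ?case
    proof
      fix l assume l: "l \<in> {1..L}"
      have "ereal (f (l * x) / (l powr a * f x)) < ereal (2 * C)"
        using l elim(1) by (meson SUP_upper order.strict_trans1)
      then show "f (l * x) \<le> 2 * C * l powr a * f x"
        using l elim(2) by (simp add: divide_less_eq mult_ac)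
    qed
  qed
qed

lemma Liminf_bound_imp_local_bound:
  fixes f :: "real \<Rightarrow> real"
  assumes "D > 0" and pos: "eventually (\<lambda>x. f x > 0) at_top"
    and "Liminf at_top (\<lambda>x. INF l\<in>{1..L}. ereal (f (l * x) / (l powr b * f x))) \<ge> ereal D"
  shows "eventually (\<lambda>x. \<forall>l\<in>{1..L}. D / 2 * l powr b * f x \<le> f (l * x)) at_top"
proof -
  have "ereal (D / 2) < ereal D" using \<open>D > 0\<close> by simp
  also have "\<dots> \<le> Liminf at_top (\<lambda>x. INF l\<in>{1..L}. ereal (f (l * x) / (l powr b * f x)))"
    by (rule assms(3))
  finally have "eventually (\<lambda>x. ereal (D / 2) < (INF l\<in>{1..L}. ereal (f (l * x) / (l powr b * f x)))) at_top"
    by (rule less_LiminfD)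
  then show ?thesis using pos
  proof eventually_elim
    case (elim x)
    show ?case
    proof
      fix l assume l: "l \<in> {1..L}"
      have "ereal (D / 2) < ereal (f (l * x) / (l powr b * f x))"
        using l elim(1) by (meson INF_lower order.strict_trans2)
      then show "D / 2 * l powr b * f x \<le> f (l * x)"
        using l elim(2) by (simp add: less_divide_eq mult_ac)
    qed
  qed
qed

lemma grows_at_most_imp_Limsup_bound:
  fixes f :: "real \<Rightarrow> real"
  assumes pos: "eventually (\<lambda>x. f x > 0) at_top" and "grows_at_most f a"
  shows "\<exists>C>0. \<forall>\<Lambda>>1. Limsup at_top (\<lambda>x. SUP l\<in>{1..\<Lambda>}. ereal (f (l * x) / (l powr a * f x)))
    \<le> ereal C"
proof -
  obtain C where C: "C > 0" and ev: "eventually (\<lambda>x. \<forall>l\<ge>1. f (l * x) \<le> C * l powr a * f x) at_top"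
    using assms(2) unfolding grows_at_most_def by blast
  have "Limsup at_top (\<lambda>x. SUP l\<in>{1..\<Lambda>}. ereal (f (l * x) / (l powr a * f x))) \<le> ereal C" for \<Lambda>
  proof (rule Limsup_bounded)
    show "eventually (\<lambda>x. (SUP l\<in>{1..\<Lambda>}. ereal (f (l * x) / (l powr a * f x))) \<le> ereal C) at_top"
      using ev pos
    proof eventually_elim
      case (elim x)
      then show ?case
        by (intro SUP_least) (auto simp: divide_le_eq mult_ac)
    qed
  qed
  then show ?thesis using C by blast
qed

lemma grows_at_least_imp_Liminf_bound:
  fixes f :: "real \<Rightarrow> real"
  assumes pos: "eventually (\<lambda>x. f x > 0) at_top" and "grows_at_least f b"
  shows "\<exists>D>0. \<forall>\<Lambda>>1. Liminf at_top (\<lambda>x. INF l\<in>{1..\<Lambda>}. ereal (f (l * x) / (l powr b * f x)))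
    \<ge> ereal D"
proof -
  obtain D where D: "D > 0" and ev: "eventually (\<lambda>x. \<forall>l\<ge>1. D * l powr b * f x \<le> f (l * x)) at_top"
    using assms(2) unfolding grows_at_least_def by blast
  have "Liminf at_top (\<lambda>x. INF l\<in>{1..\<Lambda>}. ereal (f (l * x) / (l powr b * f x))) \<ge> ereal D" for \<Lambda>
  proof (rule Liminf_bounded)
    show "eventually (\<lambda>x. ereal D \<le> (INF l\<in>{1..\<Lambda>}. ereal (f (l * x) / (l powr b * f x)))) at_top"
      using ev pos
    proof eventually_elim
      case (elim x)
      then show ?case
        by (intro INF_greatest) (auto simp: le_divide_eq mult_ac)
    qed
  qed
  then show ?thesis using D by blast
qed

lemma ereal_Inf_le_of_dense:
  assumes "\<And>a'. a < a' \<Longrightarrow> a' \<in> A"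
  shows "Inf (ereal ` A) \<le> ereal a"
proof (rule dense_ge)
  fix y assume "ereal a < y"
  then show "Inf (ereal ` A) \<le> y"
    using assms by (cases y) (auto intro: Inf_lower)
qed

lemma ereal_le_Sup_of_dense:
  assumes "\<And>b'. b' < b \<Longrightarrow> b' \<in> B"
  shows "ereal b \<le> Sup (ereal ` B)"
proof (rule dense_le)
  fix y assume "y < ereal b"
  then show "y \<le> Sup (ereal ` B)"
    using assms by (cases y) (auto intro: Sup_upper)
qed

lemma alpha_idx_eq_Inf:
  fixes f :: "real \<Rightarrow> real"
  assumes pos: "eventually (\<lambda>x. f x > 0) at_top"
  shows "alpha_idx f = Inf (ereal ` {a. grows_at_most f a})"
  unfolding alpha_idx_def
proof (rule antisym)
  show "Inf {ereal a |a. \<exists>C>0. \<forall>\<Lambda>>1.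
      Limsup at_top (\<lambda>x. SUP l\<in>{1..\<Lambda>}. ereal (f (l * x) / (l powr a * f x))) \<le> ereal C}
    \<le> Inf (ereal ` {a. grows_at_most f a})"
    by (rule Inf_superset_mono) (use grows_at_most_imp_Limsup_bound[OF pos] in blast)
  show "Inf (ereal ` {a. grows_at_most f a}) \<le> Inf {ereal a |a. \<exists>C>0. \<forall>\<Lambda>>1.
      Limsup at_top (\<lambda>x. SUP l\<in>{1..\<Lambda>}. ereal (f (l * x) / (l powr a * f x))) \<le> ereal C}"
  proof (rule Inf_greatest)
    fix z assume "z \<in> {ereal a |a. \<exists>C>0. \<forall>\<Lambda>>1.
      Limsup at_top (\<lambda>x. SUP l\<in>{1..\<Lambda>}. ereal (f (l * x) / (l powr a * f x))) \<le> ereal C}"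
    then obtain a C where z: "z = ereal a" and "C > 0" and bound: "\<forall>\<Lambda>>1.
      Limsup at_top (\<lambda>x. SUP l\<in>{1..\<Lambda>}. ereal (f (l * x) / (l powr a * f x))) \<le> ereal C"
      by blast
    have "grows_at_most f a'" if "a < a'" for a'
    proof (rule grows_at_most_of_local_bounds[OF pos _ that])
      show "2 * C > 0" using \<open>C > 0\<close> by simp
    qed (use Limsup_bound_imp_local_bound[OF \<open>C > 0\<close> pos] bound in blast)
    then show "Inf (ereal ` {a. grows_at_most f a}) \<le> z"
      unfolding z by (intro ereal_Inf_le_of_dense) simp
  qed
qed

lemma beta_idx_eq_Sup:
  fixes f :: "real \<Rightarrow> real"
  assumes pos: "eventually (\<lambda>x. f x > 0) at_top"
  shows "beta_idx f = Sup (ereal ` {b. grows_at_least f b})"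
  unfolding beta_idx_def
proof (rule antisym)
  show "Sup (ereal ` {b. grows_at_least f b}) \<le> Sup {ereal b |b. \<exists>D>0. \<forall>\<Lambda>>1.
      ereal D \<le> Liminf at_top (\<lambda>x. INF l\<in>{1..\<Lambda>}. ereal (f (l * x) / (l powr b * f x)))}"
    by (rule Sup_subset_mono) (use grows_at_least_imp_Liminf_bound[OF pos] in blast)
  show "Sup {ereal b |b. \<exists>D>0. \<forall>\<Lambda>>1.
      ereal D \<le> Liminf at_top (\<lambda>x. INF l\<in>{1..\<Lambda>}. ereal (f (l * x) / (l powr b * f x)))}
    \<le> Sup (ereal ` {b. grows_at_least f b})"
  proof (rule Sup_least)
    fix z assume "z \<in> {ereal b |b. \<exists>D>0. \<forall>\<Lambda>>1.
      ereal D \<le> Liminf at_top (\<lambda>x. INF l\<in>{1..\<Lambda>}. ereal (f (l * x) / (l powr b * f x)))}"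
    then obtain b D where z: "z = ereal b" and "D > 0" and bound: "\<forall>\<Lambda>>1.
      ereal D \<le> Liminf at_top (\<lambda>x. INF l\<in>{1..\<Lambda>}. ereal (f (l * x) / (l powr b * f x)))"
      by blast
    have "grows_at_least f b'" if "b' < b" for b'
    proof (rule grows_at_least_of_local_bounds[OF pos _ that])
      show "D / 2 > 0" using \<open>D > 0\<close> by simp
    qed (use Liminf_bound_imp_local_bound[OF \<open>D > 0\<close> pos] bound in blast)
    then show "z \<le> Sup (ereal ` {b. grows_at_least f b})"
      unfolding z by (intro ereal_le_Sup_of_dense) simp
  qed
qed

lemma alpha_idx_finite_iff:
  fixes f :: "real \<Rightarrow> real"
  assumes "eventually (\<lambda>x. f x > 0) at_top"
  shows "alpha_idx f < \<infinity> \<longleftrightarrow> (\<exists>a. grows_at_most f a)"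
  unfolding alpha_idx_eq_Inf[OF assms]
proof
  assume "Inf (ereal ` {a. grows_at_most f a}) < \<infinity>"
  then have "{a. grows_at_most f a} \<noteq> {}" by (metis Inf_empty image_empty less_irrefl top_ereal_def)
  then show "\<exists>a. grows_at_most f a" by blast
next
  assume "\<exists>a. grows_at_most f a"
  then obtain a where "grows_at_most f a" by blast
  then have "Inf (ereal ` {a. grows_at_most f a}) \<le> ereal a" by (intro Inf_lower) simp
  also have "\<dots> < \<infinity>" by simp
  finally show "Inf (ereal ` {a. grows_at_most f a}) < \<infinity>" .
qed

lemma beta_idx_pos_iff:
  fixes f :: "real \<Rightarrow> real"
  assumes "eventually (\<lambda>x. f x > 0) at_top"
  shows "0 < beta_idx f \<longleftrightarrow> (\<exists>b>0. grows_at_least f b)"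
  unfolding beta_idx_eq_Sup[OF assms] less_Sup_iff by auto

lemma alpha_idx_bigtheta:
  fixes f h :: "real \<Rightarrow> real"
  assumes "f \<in> \<Theta>(h)" and f: "eventually (\<lambda>x. f x > 0) at_top" and h: "eventually (\<lambda>x. h x > 0) at_top"
  shows "alpha_idx f = alpha_idx h"
proof -
  have "h \<in> \<Theta>(f)" using assms(1) by (simp add: bigtheta_sym)
  then have "{a. grows_at_most f a} = {a. grows_at_most h a}"
    using grows_at_most_bigtheta[OF assms(1) f h] grows_at_most_bigtheta[OF _ h f] by blast
  then show ?thesis by (simp add: alpha_idx_eq_Inf[OF f] alpha_idx_eq_Inf[OF h])
qed

lemma beta_idx_bigtheta:
  fixes f h :: "real \<Rightarrow> real"
  assumes "f \<in> \<Theta>(h)" and f: "eventually (\<lambda>x. f x > 0) at_top" and h: "eventually (\<lambda>x. h x > 0) at_top"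
  shows "beta_idx f = beta_idx h"
proof -
  have "h \<in> \<Theta>(f)" using assms(1) by (simp add: bigtheta_sym)
  then have "{b. grows_at_least f b} = {b. grows_at_least h b}"
    using grows_at_least_bigtheta[OF assms(1) f h] grows_at_least_bigtheta[OF _ h f] by blast
  then show ?thesis by (simp add: beta_idx_eq_Sup[OF f] beta_idx_eq_Sup[OF h])
qed

lemma Inf_Sup_reciprocal:
  fixes A B :: "real set"
  assumes AB: "\<And>b. b \<in> B \<Longrightarrow> b > 0 \<Longrightarrow> 1 / b \<in> A"
    and BA: "\<And>a. a \<in> A \<Longrightarrow> a > 0 \<Longrightarrow> 1 / a \<in> B"
    and b0: "b0 \<in> B" "b0 > 0" and A_pos: "\<And>a. a \<in> A \<Longrightarrow> a > 0"
    and B_bounded: "\<And>b. b \<in> B \<Longrightarrow> b \<le> u"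
  shows "Inf (ereal ` A) = 1 / Sup (ereal ` B)" "Sup (ereal ` B) = 1 / Inf (ereal ` A)"
proof -
  have "ereal b0 \<le> Sup (ereal ` B)" "Sup (ereal ` B) \<le> ereal u"
    using b0 B_bounded by (auto intro: Sup_upper simp: Sup_le_iff)
  then obtain r where r: "Sup (ereal ` B) = ereal r" and "r > 0"
    using b0 by (cases "Sup (ereal ` B)") auto
  have "Inf (ereal ` A) = ereal (1 / r)"
  proof (rule antisym)
    show "ereal (1 / r) \<le> Inf (ereal ` A)"
    proof (rule Inf_greatest)
      fix z assume "z \<in> ereal ` A"
      then obtain a where z: "z = ereal a" and a: "a \<in> A" by blast
      have "ereal (1 / a) \<le> Sup (ereal ` B)" using BA[OF a A_pos[OF a]] by (simp add: Sup_upper)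
      then have "1 / a \<le> r" using r by simp
      then show "ereal (1 / r) \<le> z" using z A_pos[OF a] \<open>r > 0\<close> by (simp add: field_simps)
    qed
    show "Inf (ereal ` A) \<le> ereal (1 / r)"
    proof (rule dense_ge)
      fix y assume y: "ereal (1 / r) < y"
      show "Inf (ereal ` A) \<le> y"
      proof (cases y)
        case (real y')
        then have "1 / r < y'" using y by simp
        then have "y' > 0" using \<open>r > 0\<close> by (smt (verit) divide_pos_pos)
        then have "ereal (1 / y') < Sup (ereal ` B)"
          using \<open>1 / r < y'\<close> r \<open>r > 0\<close> by (simp add: field_simps)
        then obtain b where b: "b \<in> B" "1 / y' < b" by (auto simp: less_Sup_iff)
        then have "b > 0" using \<open>y' > 0\<close> by (smt (verit) divide_pos_pos)
        have "Inf (ereal ` A) \<le> ereal (1 / b)" using AB[OF b(1) \<open>b > 0\<close>] by (simp add: Inf_lower)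
        also have "1 / b < y'" using b \<open>y' > 0\<close> \<open>b > 0\<close> by (simp add: field_simps)
        finally show ?thesis using real by simp
      qed (use y in auto)
    qed
  qed
  then show "Inf (ereal ` A) = 1 / Sup (ereal ` B)" "Sup (ereal ` B) = 1 / Inf (ereal ` A)"
    using r \<open>r > 0\<close> by (simp_all add: divide_ereal_def inverse_eq_divide)
qed

section \<open>Weight sequences\<close>

locale weight_sequence =
  fixes M :: "nat \<Rightarrow> real"
  assumes weight_seq: "weight_seq M"
begin

abbreviation m :: "nat \<Rightarrow> real" where "m \<equiv> quot M"

lemma M_0: "M 0 = 1" and M_pos: "M p > 0"
  using weight_seq unfolding weight_seq_def by auto

lemma quot_pos: "m p > 0"
  using M_pos by (simp add: quot_def)

lemma quot_Suc_ge: "m p \<le> m (Suc p)"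
proof -
  have "(M (Suc p))\<^sup>2 \<le> M p * M (Suc (Suc p))"
    using weight_seq unfolding weight_seq_def by (metis Suc_eq_plus1 diff_Suc_1 le_add2)
  then show ?thesis
    using M_pos[of p] M_pos[of "Suc p"] unfolding quot_def
    by (simp add: power2_eq_square divide_le_eq le_divide_eq mult_ac)
qed

lemma quot_mono: "p \<le> q \<Longrightarrow> m p \<le> m q"
  using lift_Suc_mono_le[of m, OF quot_Suc_ge] by blast

lemma M_add: "M (p + q) = M p * (\<Prod>j<q. m (p + j))"
proof (induction q)
  case (Suc q)
  have "M (p + Suc q) = M (p + q) * m (p + q)" using M_pos[of "p + q"] by (simp add: quot_def)
  then show ?case using Suc by (simp add: mult.assoc)
qed simp

lemma M_eq_prod: "M p = (\<Prod>j<p. m j)"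
  using M_add[of 0 p] by (simp add: M_0)

lemma quot_unbounded: "\<exists>j. t < m j"
proof (rule ccontr)
  assume "\<not> (\<exists>j. t < m j)"
  then have le: "m j \<le> t" for j by (simp add: not_less)
  then have "t > 0" using quot_pos[of 0] by (rule less_le_trans[rotated])
  have "filterlim (\<lambda>p. root p (M p)) at_top sequentially"
    using weight_seq unfolding weight_seq_def by blast
  then obtain N where N: "\<forall>n\<ge>N. t + 1 \<le> root n (M n)"
    unfolding filterlim_at_top eventually_sequentially by blast
  define p where "p = Suc N"
  have "M p = (\<Prod>j<p. m j)" by (rule M_eq_prod)
  also have "\<dots> \<le> (\<Prod>j<p. t)" using le quot_pos by (intro prod_mono) (simp add: less_imp_le)
  finally have "root p (M p) \<le> root p (t ^ p)" by (simp add: p_def)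
  also have "\<dots> = t" using \<open>t > 0\<close> real_root_power_cancel[of p t] by (simp add: p_def)
  moreover have "t + 1 \<le> root p (M p)" using N by (simp add: p_def)
  ultimately show False by simp
qed

definition nu_nat :: "real \<Rightarrow> nat" where
  "nu_nat t = (LEAST j. t < m j)"

lemma less_nu_nat_iff: "j < nu_nat t \<longleftrightarrow> m j \<le> t"
proof
  assume "j < nu_nat t"
  then show "m j \<le> t" unfolding nu_nat_def using not_less_Least by fastforce
next
  assume "m j \<le> t"
  obtain k where "t < m k" using quot_unbounded by blast
  then have "t < m (nu_nat t)" unfolding nu_nat_def by (rule LeastI)
  then show "j < nu_nat t" using \<open>m j \<le> t\<close> quot_mono by (meson not_le order.trans)
qed

lemma nu_m_eq: "nu_m m t = real (nu_nat t)"
proof -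
  have "{j. m j \<le> t} = {..<nu_nat t}" using less_nu_nat_iff by auto
  then show ?thesis unfolding nu_m_def by simp
qed

lemma quot_nu_nat_gt: "t < m (nu_nat t)"
  using less_nu_nat_iff[of "nu_nat t" t] by simp

lemma nu_nat_le: "t < m k \<Longrightarrow> nu_nat t \<le> k"
  using less_nu_nat_iff[of k t] by simp

lemma nu_nat_mono: "s \<le> t \<Longrightarrow> nu_nat s \<le> nu_nat t"
  using quot_nu_nat_gt[of t] by (intro nu_nat_le) simp

lemma eventually_nu_m_pos: "eventually (\<lambda>t. nu_m m t > 0) at_top"
  using eventually_ge_at_top[of "m 0"]
  by eventually_elim (simp add: nu_m_eq less_nu_nat_iff[of 0, symmetric])

lemma ln_pow_div_M:
  assumes "s > 0"
  shows "ln (s ^ p / M p) = (\<Sum>j<p. ln (s / m j))"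
proof -
  have "s ^ p / M p = (\<Prod>j<p. s / m j)" by (simp add: M_eq_prod prod_dividef)
  then show ?thesis using assms quot_pos by (simp only:) (rule ln_prod, auto simp: less_imp_neq[symmetric])
qed

lemma ln_mult_div_quot: "l > 0 \<Longrightarrow> t > 0 \<Longrightarrow> ln (l * t / m j) = ln l + ln (t / m j)"
  using ln_mult[of l "t / m j"] quot_pos[of j] by simp

text \<open>The terms \<open>ln (s / m j)\<close> are nonnegative exactly for \<open>j < nu_nat s\<close>, so the
  partial sums are maximal at \<open>p = nu_nat s\<close>.\<close>

lemma sum_ln_le_nu_nat:
  assumes "s > 0"
  shows "(\<Sum>j<p. ln (s / m j)) \<le> (\<Sum>j<nu_nat s. ln (s / m j))"
proof (cases "p \<le> nu_nat s")
  case True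
  have "(\<Sum>j\<in>{p..<nu_nat s}. ln (s / m j)) \<ge> 0"
    using assms quot_pos less_nu_nat_iff by (intro sum_nonneg) (auto simp: le_divide_eq)
  then show ?thesis
    using sum.atLeastLessThan_concat[OF le0 True, of "\<lambda>j. ln (s / m j)"] by (simp add: atLeast0LessThan)
next
  case False
  have "(\<Sum>j\<in>{nu_nat s..<p}. ln (s / m j)) \<le> 0"
  proof (intro sum_nonpos)
    fix j assume "j \<in> {nu_nat s..<p}"
    then have "s < m j" using less_nu_nat_iff[of j s] by auto
    then show "ln (s / m j) \<le> 0" using assms quot_pos[of j] by simp
  qed
  then show ?thesis
    using False sum.atLeastLessThan_concat[OF le0, of "nu_nat s" p "\<lambda>j. ln (s / m j)"]
    by (simp add: atLeast0LessThan)
qed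

lemma omegaM_eq_sum:
  assumes "s > 0"
  shows "omegaM M s = (\<Sum>j<nu_nat s. ln (s / m j))"
proof -
  have "omegaM M s = (SUP p. \<Sum>j<p. ln (s / m j))"
    using assms by (simp add: omegaM_def ln_pow_div_M)
  also have "\<dots> = (\<Sum>j<nu_nat s. ln (s / m j))"
    by (rule cSup_eq_maximum) (use sum_ln_le_nu_nat[OF assms] in auto)
  finally show ?thesis .
qed

lemma sum_ln_le_omegaM: "s > 0 \<Longrightarrow> (\<Sum>j<p. ln (s / m j)) \<le> omegaM M s"
  using omegaM_eq_sum sum_ln_le_nu_nat by simp

lemma omegaM_nonneg: "s > 0 \<Longrightarrow> 0 \<le> omegaM M s"
  using sum_ln_le_omegaM[of s 0] by simp

lemma omegaM_pos:
  assumes "m 0 < s"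
  shows "0 < omegaM M s"
proof -
  have "0 < ln (s / m 0)" using assms quot_pos[of 0] by simp
  also have "\<dots> \<le> omegaM M s" using sum_ln_le_omegaM[of s 1] assms quot_pos[of 0] by simp
  finally show ?thesis .
qed

lemma eventually_omegaM_pos: "eventually (\<lambda>t. omegaM M t > 0) at_top"
  using eventually_gt_at_top[of "m 0"] by eventually_elim (rule omegaM_pos)

lemma omegaM_mult_ge:
  assumes "t > 0" "l \<ge> 1"
  shows "omegaM M t + nu_m m t * ln l \<le> omegaM M (l * t)"
proof -
  have "omegaM M t + nu_m m t * ln l = (\<Sum>j<nu_nat t. ln (l * t / m j))"
    using assms by (simp add: omegaM_eq_sum nu_m_eq ln_mult_div_quot sum.distrib)
  also have "\<dots> \<le> omegaM M (l * t)" using assms by (intro sum_ln_le_omegaM) simp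
  finally show ?thesis .
qed

lemma omegaM_mult_le:
  assumes "t > 0" "l \<ge> 1"
  shows "omegaM M (l * t) \<le> omegaM M t + nu_m m (l * t) * ln l"
proof -
  have "omegaM M (l * t) = (\<Sum>j<nu_nat (l * t). ln (t / m j)) + nu_m m (l * t) * ln l"
    using assms by (simp add: omegaM_eq_sum nu_m_eq ln_mult_div_quot sum.distrib)
  also have "\<dots> \<le> omegaM M t + nu_m m (l * t) * ln l"
    using sum_ln_le_omegaM[OF \<open>t > 0\<close>] by simp
  finally show ?thesis .
qed

lemma omegaM_mono:
  assumes "0 < s" "s \<le> t"
  shows "omegaM M s \<le> omegaM M t"
proof -
  have "omegaM M s + nu_m m s * ln (t / s) \<le> omegaM M (t / s * s)"
    using assms by (intro omegaM_mult_ge) auto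
  moreover have "nu_m m s * ln (t / s) \<ge> 0" using assms by (simp add: nu_m_def)
  ultimately show ?thesis using assms by simp
qed

lemma nu_m_le_omegaM: "t > 0 \<Longrightarrow> nu_m m t \<le> omegaM M (exp 1 * t)"
  using omegaM_mult_ge[of t "exp 1"] omegaM_nonneg[of t] by simp

section \<open>Growth conditions on the quotients\<close>

lemma seq_step_of_nat: "seq_step m (real j + 1) = m j"
proof -
  have "nat \<lfloor>real j + 1\<rfloor> = j + 1" by linarith
  then show ?thesis unfolding seq_step_def by simp
qed

lemma seq_step_pos: "seq_step m x > 0"
  unfolding seq_step_def using quot_pos by simp

lemma eventually_seq_step_pos: "eventually (\<lambda>x. seq_step m x > 0) at_top"
  using seq_step_pos by simp

lemma seq_step_mult_cases:
  assumes x: "x \<ge> 2" and l: "l \<ge> 1"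
  obtains j k where "seq_step m (l * x) = m j" "seq_step m x = m k" "k \<le> j"
    "x - 1 < real k + 1" "real k + 1 \<le> x" "l * x - 1 < real j + 1" "real j + 1 \<le> l * x"
proof -
  have "l * x \<ge> x" using x l by simp
  define J where "J = nat \<lfloor>l * x\<rfloor>"
  define K where "K = nat \<lfloor>x\<rfloor>"
  have J: "J \<ge> 1" "real J \<le> l * x" "l * x < real J + 1" using \<open>l * x \<ge> x\<close> x unfolding J_def by linarith+
  have K: "K \<ge> 1" "real K \<le> x" "x < real K + 1" using x unfolding K_def by linarith+
  have "K \<le> J" unfolding J_def K_def using \<open>l * x \<ge> x\<close> by (simp add: floor_mono nat_mono)
  moreover have "seq_step m (l * x) = m (J - 1)" "seq_step m x = m (K - 1)"
    unfolding seq_step_def J_def K_def by simp_all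
  moreover have "real (K - 1) + 1 = real K" "real (J - 1) + 1 = real J"
    using J K by (simp_all add: of_nat_diff)
  ultimately show ?thesis using J K by (intro that[of "J - 1" "K - 1"]) auto
qed

text \<open>The ratio \<open>(j + 1) / (k + 1)\<close> rather than \<open>j / k\<close>: \<open>m j\<close> is the value of \<open>seq_step m\<close> on
  \<open>[j + 1, j + 2)\<close>.\<close>

definition quot_grows_at_most :: "real \<Rightarrow> bool" where
  "quot_grows_at_most a \<longleftrightarrow>
     (\<exists>C>0. \<forall>k j. k \<le> j \<longrightarrow> m j \<le> C * ((real j + 1) / (real k + 1)) powr a * m k)"

definition quot_eventually_grows_at_most :: "real \<Rightarrow> bool" where
  "quot_eventually_grows_at_most a \<longleftrightarrow> (\<exists>C>0. \<exists>k0. \<forall>k j. k0 \<le> k \<longrightarrow> k \<le> j \<longrightarrow>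
     m j \<le> C * ((real j + 1) / (real k + 1)) powr a * m k)"

definition quot_eventually_grows_at_least :: "real \<Rightarrow> bool" where
  "quot_eventually_grows_at_least b \<longleftrightarrow> (\<exists>D>0. \<exists>k0. \<forall>k j. k0 \<le> k \<longrightarrow> k \<le> j \<longrightarrow>
     D * ((real j + 1) / (real k + 1)) powr b * m k \<le> m j)"

lemma quot_eventually_grows_at_most_of_seq_step:
  assumes "grows_at_most (seq_step m) a"
  shows "quot_eventually_grows_at_most a"
proof -
  obtain C x0 where "C > 0" and C: "\<And>x l. x \<ge> x0 \<Longrightarrow> l \<ge> 1 \<Longrightarrow>
      seq_step m (l * x) \<le> C * l powr a * seq_step m x"
    using assms unfolding grows_at_most_def eventually_at_top_linorder by blast
  have "m j \<le> C * ((real j + 1) / (real k + 1)) powr a * m k"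
    if "nat \<lceil>x0\<rceil> \<le> k" "k \<le> j" for k j
    using C[of "real k + 1" "(real j + 1) / (real k + 1)"] that
    by (simp add: seq_step_of_nat)
  then show ?thesis unfolding quot_eventually_grows_at_most_def using \<open>C > 0\<close> by blast
qed

lemma quot_eventually_grows_at_least_of_seq_step:
  assumes "grows_at_least (seq_step m) b"
  shows "quot_eventually_grows_at_least b"
proof -
  obtain D x0 where "D > 0" and D: "\<And>x l. x \<ge> x0 \<Longrightarrow> l \<ge> 1 \<Longrightarrow>
      D * l powr b * seq_step m x \<le> seq_step m (l * x)"
    using assms unfolding grows_at_least_def eventually_at_top_linorder by blast
  have "D * ((real j + 1) / (real k + 1)) powr b * m k \<le> m j"
    if "nat \<lceil>x0\<rceil> \<le> k" "k \<le> j" for k j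
    using D[of "real k + 1" "(real j + 1) / (real k + 1)"] that
    by (simp add: seq_step_of_nat)
  then show ?thesis unfolding quot_eventually_grows_at_least_def using \<open>D > 0\<close> by blast
qed

lemma seq_step_grows_at_most_of_quot:
  assumes "quot_eventually_grows_at_most a" "a \<ge> 0"
  shows "grows_at_most (seq_step m) a"
proof -
  obtain C k0 where "C > 0" and C: "\<And>k j. k0 \<le> k \<Longrightarrow> k \<le> j \<Longrightarrow>
      m j \<le> C * ((real j + 1) / (real k + 1)) powr a * m k"
    using assms unfolding quot_eventually_grows_at_most_def by blast
  have "seq_step m (l * x) \<le> (C * 2 powr a) * l powr a * seq_step m x"
    if x: "x \<ge> real k0 + 2" and l: "l \<ge> 1" for x l
  proof -
    obtain j k where jk: "seq_step m (l * x) = m j" "seq_step m x = m k" "k \<le> j"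
      "x - 1 < real k + 1" "real k + 1 \<le> x" "l * x - 1 < real j + 1" "real j + 1 \<le> l * x"
      using seq_step_mult_cases[of x l] x l by auto
    have "(real j + 1) / (real k + 1) \<le> (l * x) / (x / 2)"
      using jk x by (intro frac_le) auto
    also have "\<dots> = 2 * l" using x by simp
    finally have ratio: "(real j + 1) / (real k + 1) \<le> 2 * l" .
    have "m j \<le> C * ((real j + 1) / (real k + 1)) powr a * m k" using C jk x by simp
    also have "\<dots> \<le> C * (2 * l) powr a * m k"
      using ratio assms(2) \<open>C > 0\<close> quot_pos[of k] by (intro mult_right_mono mult_left_mono powr_mono2) auto
    also have "\<dots> = (C * 2 powr a) * l powr a * m k" using l by (simp add: powr_mult)
    finally show ?thesis using jk by simp
  qed
  then have "eventually (\<lambda>x. \<forall>l\<ge>1. seq_step m (l * x) \<le> (C * 2 powr a) * l powr a * seq_step m x) at_top"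
    unfolding eventually_at_top_linorder by blast
  then show ?thesis unfolding grows_at_most_def using \<open>C > 0\<close> by (intro exI[of _ "C * 2 powr a"]) simp
qed

lemma seq_step_grows_at_least_of_quot:
  assumes "quot_eventually_grows_at_least b" "b \<ge> 0"
  shows "grows_at_least (seq_step m) b"
proof -
  obtain D k0 where "D > 0" and D: "\<And>k j. k0 \<le> k \<Longrightarrow> k \<le> j \<Longrightarrow>
      D * ((real j + 1) / (real k + 1)) powr b * m k \<le> m j"
    using assms unfolding quot_eventually_grows_at_least_def by blast
  have "(D * (1 / 2) powr b) * l powr b * seq_step m x \<le> seq_step m (l * x)"
    if x: "x \<ge> real k0 + 2" and l: "l \<ge> 1" for x l
  proof -
    obtain j k where jk: "seq_step m (l * x) = m j" "seq_step m x = m k" "k \<le> j"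
      "x - 1 < real k + 1" "real k + 1 \<le> x" "l * x - 1 < real j + 1" "real j + 1 \<le> l * x"
      using seq_step_mult_cases[of x l] x l by auto
    have "l * x \<ge> 2" using x l by (smt (verit) mult_le_cancel_right1 of_nat_0_le_iff)
    have "l / 2 = (l * x / 2) / x" using x by simp
    also have "\<dots> \<le> (real j + 1) / (real k + 1)"
      using jk x \<open>l * x \<ge> 2\<close> by (intro frac_le) auto
    finally have ratio: "l / 2 \<le> (real j + 1) / (real k + 1)" .
    have "(D * (1 / 2) powr b) * l powr b * m k = D * (l / 2) powr b * m k"
      using l by (simp add: powr_divide)
    also have "\<dots> \<le> D * ((real j + 1) / (real k + 1)) powr b * m k"
      using ratio assms(2) \<open>D > 0\<close> quot_pos[of k] l
      by (intro mult_right_mono mult_left_mono powr_mono2) auto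
    also have "\<dots> \<le> m j" using D jk x by simp
    finally show ?thesis using jk by simp
  qed
  then have "eventually (\<lambda>x. \<forall>l\<ge>1. (D * (1 / 2) powr b) * l powr b * seq_step m x \<le> seq_step m (l * x)) at_top"
    unfolding eventually_at_top_linorder by blast
  then show ?thesis unfolding grows_at_least_def using \<open>D > 0\<close> by (intro exI[of _ "D * (1 / 2) powr b"]) simp
qed

definition quot_doubling :: bool where
  "quot_doubling \<longleftrightarrow> (\<exists>K\<ge>1. \<forall>k. m (2 * k + 1) \<le> K * m k)"

lemma quot_doubling_of_eventually:
  assumes "\<And>k. k \<ge> k0 \<Longrightarrow> m (2 * k + 1) \<le> K * m k"
  shows quot_doubling
proof -
  define K' where "K' = max 1 K + (\<Sum>k<k0. m (2 * k + 1) / m k)"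
  have S: "(\<Sum>k<k0. m (2 * k + 1) / m k) \<ge> 0" using quot_pos by (intro sum_nonneg) (simp add: less_imp_le)
  have "m (2 * k + 1) \<le> K' * m k" for k
  proof (cases "k \<ge> k0")
    case True
    then have "m (2 * k + 1) \<le> K * m k" by (rule assms)
    also have "\<dots> \<le> K' * m k" using S quot_pos[of k] unfolding K'_def by (intro mult_right_mono) auto
    finally show ?thesis .
  next
    case False
    then have "m (2 * k + 1) / m k \<le> (\<Sum>k<k0. m (2 * k + 1) / m k)"
      using quot_pos by (intro member_le_sum) (auto simp: less_imp_le)
    also have "\<dots> \<le> K'" unfolding K'_def by simp
    finally show ?thesis using quot_pos[of k] by (simp add: divide_le_eq)
  qed
  moreover have "K' \<ge> 1" using S unfolding K'_def by linarith
  ultimately show ?thesis unfolding quot_doubling_def by blast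
qed

lemma quot_eventually_grows_at_most_imp_doubling:
  assumes "quot_eventually_grows_at_most a"
  shows quot_doubling
proof -
  obtain C k0 where C: "\<And>k j. k0 \<le> k \<Longrightarrow> k \<le> j \<Longrightarrow>
      m j \<le> C * ((real j + 1) / (real k + 1)) powr a * m k"
    using assms unfolding quot_eventually_grows_at_most_def by blast
  have "m (2 * k + 1) \<le> C * 2 powr a * m k" if "k \<ge> k0" for k
  proof -
    have "m (2 * k + 1) \<le> C * ((real (2 * k + 1) + 1) / (real k + 1)) powr a * m k"
      using that by (intro C) auto
    moreover have "(real (2 * k + 1) + 1) / (real k + 1) = 2" by (simp add: field_simps)
    ultimately show ?thesis by simp
  qed
  then show ?thesis by (rule quot_doubling_of_eventually)
qed

lemma quot_le_of_doubling:
  assumes a: "a \<ge> 0" and dbl: "\<And>k. m (2 * k + 1) \<le> 2 powr a * m k" and "k \<le> j"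
  shows "m j \<le> 2 powr a * max 1 (real j / (real k + 1)) powr a * m k"
  using \<open>k \<le> j\<close>
proof (induction j rule: less_induct)
  case (less j)
  have one_le: "1 \<le> max 1 (real j / (real k + 1)) powr a" using a by (simp add: ge_one_powr_ge_zero)
  show ?case
  proof (cases "j \<le> 2 * k + 1")
    case True
    then have "m j \<le> m (2 * k + 1)" by (rule quot_mono)
    also have "\<dots> \<le> 2 powr a * m k" by (rule dbl)
    also have "\<dots> \<le> 2 powr a * max 1 (real j / (real k + 1)) powr a * m k"
      using one_le quot_pos[of k] by (simp add: mult_right_mono)
    finally show ?thesis .
  next
    case False
    define i where "i = j div 2"
    have "k + 1 \<le> i" "i < j" "j \<le> 2 * i + 1" using False unfolding i_def by linarith+
    then have i: "1 \<le> real i / (real k + 1)" by simp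
    have "m j \<le> m (2 * i + 1)" using \<open>j \<le> 2 * i + 1\<close> by (rule quot_mono)
    also have "\<dots> \<le> 2 powr a * m i" by (rule dbl)
    also have "\<dots> \<le> 2 powr a * (2 powr a * (real i / (real k + 1)) powr a * m k)"
      using less.IH[OF \<open>i < j\<close>] \<open>k + 1 \<le> i\<close> i by (simp add: max_def)
    also have "\<dots> = 2 powr a * (2 * (real i / (real k + 1))) powr a * m k"
    proof -
      have "(2 * (real i / (real k + 1))) powr a = 2 powr a * (real i / (real k + 1)) powr a"
        by (rule powr_mult)
      then show ?thesis by (simp only: mult.assoc)
    qed
    also have "\<dots> \<le> 2 powr a * max 1 (real j / (real k + 1)) powr a * m k"
    proof -
      have "2 * (real i / (real k + 1)) \<le> max 1 (real j / (real k + 1))"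
        unfolding i_def by (simp add: divide_right_mono max.coboundedI2)
      then show ?thesis using a i quot_pos[of k] by (intro mult_right_mono mult_left_mono powr_mono2) auto
    qed
    finally show ?thesis .
  qed
qed

lemma doubling_imp_quot_grows_at_most:
  assumes quot_doubling
  shows "\<exists>a>0. quot_grows_at_most a"
proof -
  obtain K where K: "K \<ge> 1" "\<And>k. m (2 * k + 1) \<le> K * m k"
    using assms unfolding quot_doubling_def by blast
  define a where "a = log 2 (2 * K)"
  have "a > 0" "2 powr a = 2 * K" using K unfolding a_def by simp_all
  have dbl: "m (2 * k + 1) \<le> 2 powr a * m k" for k
  proof -
    have "K * m k \<le> 2 * K * m k" using quot_pos[of k] \<open>K \<ge> 1\<close> by simp
    then show ?thesis using K(2)[of k] \<open>2 powr a = 2 * K\<close> by simp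
  qed
  have "m j \<le> 2 powr a * ((real j + 1) / (real k + 1)) powr a * m k" if "k \<le> j" for k j
  proof -
    have "m j \<le> 2 powr a * max 1 (real j / (real k + 1)) powr a * m k"
      using quot_le_of_doubling[OF less_imp_le[OF \<open>a > 0\<close>] dbl that] .
    also have "\<dots> \<le> 2 powr a * ((real j + 1) / (real k + 1)) powr a * m k"
      using that \<open>a > 0\<close> quot_pos[of k]
      by (intro mult_right_mono mult_left_mono powr_mono2) (auto simp: divide_right_mono)
    finally show ?thesis .
  qed
  then have "quot_grows_at_most a" unfolding quot_grows_at_most_def by (intro exI[of _ "2 powr a"]) auto
  then show ?thesis using \<open>a > 0\<close> by blast
qed

lemma M_le_quot_pow: "M p \<le> m p ^ p"
proof -
  have "M p = (\<Prod>j<p. m j)" by (rule M_eq_prod)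
  also have "\<dots> \<le> (\<Prod>j<p. m p)" using quot_pos quot_mono by (intro prod_mono) (auto simp: less_imp_le)
  finally show ?thesis by simp
qed

text \<open>Moderate growth with \<open>q = 2 p + 1\<close> gives \<open>m (2 p + 1) ^ p \<le> M (3 p + 1) / M (2 p + 1)
  \<le> A ^ (3 p + 1) M p \<le> (A ^ 4 m p) ^ p\<close>.\<close>

lemma moderate_growth_imp_doubling:
  assumes "moderate_growth M"
  shows quot_doubling
proof -
  obtain A0 where "A0 > 0" and A0: "\<And>p q. M (p + q) \<le> A0 ^ (p + q) * M p * M q"
    using assms unfolding moderate_growth_def by blast
  define A where "A = max A0 1"
  have "A \<ge> 1" unfolding A_def by simp
  have A: "M (p + q) \<le> A ^ (p + q) * M p * M q" for p q
  proof -
    have "A0 ^ (p + q) \<le> A ^ (p + q)" using \<open>A0 > 0\<close> unfolding A_def by (intro power_mono) auto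
    then show ?thesis using A0[of p q] M_pos[of p] M_pos[of q] by (smt (verit) mult_right_mono)
  qed
  have "m (2 * p + 1) \<le> A ^ 4 * m p" if "p \<ge> 1" for p
  proof -
    have "m (2 * p + 1) ^ p = (\<Prod>j<p. m (2 * p + 1))" by simp
    also have "\<dots> \<le> (\<Prod>j<p. m (2 * p + 1 + j))"
      using quot_pos quot_mono by (intro prod_mono) (auto simp: less_imp_le)
    also have "\<dots> = M (2 * p + 1 + p) / M (2 * p + 1)"
      using M_pos[of "2 * p + 1"] M_add[of "2 * p + 1" p] by simp
    also have "\<dots> \<le> A ^ (2 * p + 1 + p) * M p"
      using A[of "2 * p + 1" p] M_pos[of "2 * p + 1"] by (simp add: divide_le_eq mult_ac)
    also have "\<dots> \<le> (A ^ 4) ^ p * m p ^ p"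
    proof (intro mult_mono)
      show "A ^ (2 * p + 1 + p) \<le> (A ^ 4) ^ p"
        unfolding power_mult[symmetric] using \<open>A \<ge> 1\<close> that by (intro power_increasing) auto
    qed (use M_le_quot_pow M_pos[of p] \<open>A \<ge> 1\<close> in auto)
    also have "\<dots> = (A ^ 4 * m p) ^ p" by (simp add: power_mult_distrib)
    finally have "m (2 * p + 1) ^ p \<le> (A ^ 4 * m p) ^ p" .
    then show ?thesis using that quot_pos[of p] quot_pos[of "2 * p + 1"] \<open>A \<ge> 1\<close> by simp
  qed
  then show ?thesis by (rule quot_doubling_of_eventually)
qed

text \<open>Splitting \<open>M (p + q) = M p \<Prod>\<^sub>i\<^sub><\<^sub>q m (p + i)\<close> and comparing \<open>m (p + i)\<close> with \<open>m i\<close>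
  leaves the product \<open>\<Prod>\<^sub>i\<^sub><\<^sub>q (p + i + 1) / (i + 1)\<close>, a binomial coefficient
  bounded by \<open>2 ^ (p + q)\<close>.\<close>

lemma doubling_imp_moderate_growth:
  assumes quot_doubling
  shows "moderate_growth M"
proof -
  obtain a C where "a > 0" "C > 0"
    and C: "\<And>k j. k \<le> j \<Longrightarrow> m j \<le> C * ((real j + 1) / (real k + 1)) powr a * m k"
    using doubling_imp_quot_grows_at_most[OF assms] unfolding quot_grows_at_most_def by blast
  define C' where "C' = max C 1"
  define A where "A = C' * 2 powr a"
  have C': "C' \<ge> 1" "C \<le> C'" unfolding C'_def by auto
  have "M (p + q) \<le> A ^ (p + q) * M p * M q" for p q
  proof -
    have "(\<Prod>i<q. m (p + i)) \<le> (\<Prod>i<q. C' * ((real p + real i + 1) / (real i + 1)) powr a * m i)"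
    proof (intro prod_mono conjI)
      fix i
      have "m (p + i) \<le> C * ((real (p + i) + 1) / (real i + 1)) powr a * m i" by (rule C) simp
      also have "\<dots> \<le> C' * ((real p + real i + 1) / (real i + 1)) powr a * m i"
        using C' quot_pos[of i] by (intro mult_right_mono) (auto simp: add.assoc)
      finally show "m (p + i) \<le> C' * ((real p + real i + 1) / (real i + 1)) powr a * m i" .
    qed (use quot_pos in \<open>auto simp: less_imp_le\<close>)
    also have "\<dots> = C' ^ q * (\<Prod>i<q. (real p + real i + 1) / (real i + 1)) powr a * M q"
      by (simp add: prod.distrib prod_powr_distrib M_eq_prod)
    also have "\<dots> = C' ^ q * real ((p + q) choose q) powr a * M q" by (simp add: prod_ratio_eq_binomial)
    also have "\<dots> \<le> C' ^ (p + q) * (2 ^ (p + q)) powr a * M q"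
    proof (intro mult_mono)
      show "C' ^ q \<le> C' ^ (p + q)" using C' by (intro power_increasing) auto
      show "real ((p + q) choose q) powr a \<le> (2 ^ (p + q)) powr a"
        using \<open>a > 0\<close> binomial_le_pow2[of "p + q" q] by (intro powr_mono2) (auto simp: of_nat_le_iff[symmetric])
    qed (use C' M_pos[of q] in auto)
    also have "\<dots> = A ^ (p + q) * M q"
      unfolding A_def by (simp add: power_mult_distrib powr_realpow[symmetric] powr_powr mult.commute powr_power)
    finally have "M p * (\<Prod>i<q. m (p + i)) \<le> M p * (A ^ (p + q) * M q)" using M_pos[of p] by simp
    then show ?thesis by (simp add: M_add mult_ac)
  qed
  moreover have "A > 0" unfolding A_def using C' by simp
  ultimately show ?thesis unfolding moderate_growth_def by blast
qed

lemma moderate_growth_iff_doubling: "moderate_growth M \<longleftrightarrow> quot_doubling"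
  using moderate_growth_imp_doubling doubling_imp_moderate_growth by blast

definition quot_expanding :: bool where
  "quot_expanding \<longleftrightarrow> (\<exists>k\<ge>2. \<exists>p0. \<forall>p\<ge>p0. 2 * m p \<le> m (k * p))"

lemma quot_iterate_ge:
  assumes "k \<ge> 1" "d \<ge> 0" and step: "\<And>p. p \<ge> p0 \<Longrightarrow> d * m p \<le> m (k * p)" and "p \<ge> p0"
  shows "d ^ i * m p \<le> m (k ^ i * p)"
proof (induction i)
  case (Suc i)
  have "1 \<le> k ^ i" using \<open>k \<ge> 1\<close> by simp
  then have "p \<le> k ^ i * p" by (metis mult_1 mult_le_mono1)
  then have "d * m (k ^ i * p) \<le> m (k * (k ^ i * p))" using \<open>p \<ge> p0\<close> by (intro step) linarith
  moreover have "d * (d ^ i * m p) \<le> d * m (k ^ i * p)" using Suc \<open>d \<ge> 0\<close> by (rule mult_left_mono)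
  ultimately show ?case by (simp add: mult.assoc)
qed simp

text \<open>With \<open>k ^ b = 2\<close>: passing from \<open>i = j div k\<close> to \<open>j\<close> multiplies the quotient by at least
  \<open>2\<close> and the index ratio by at most \<open>k\<close>.\<close>

lemma quot_ge_of_expanding:
  assumes k: "k \<ge> 2" and expand: "\<And>p. p \<ge> p0 \<Longrightarrow> 2 * m p \<le> m (k * p)"
    and b: "b > 0" "real k powr b = 2" and "p0 \<le> p" "p \<le> j"
  shows "((real j + 1) / (real k * (real p + 1))) powr b * m p \<le> m j"
  using \<open>p \<le> j\<close>
proof (induction j rule: less_induct)
  case (less j)
  have kr: "real k \<ge> 2" using k by simp
  show ?case
  proof (cases "j + 1 \<le> k * (p + 1)")
    case True
    then have "real j + 1 \<le> real k * (real p + 1)" by (metis of_nat_le_iff of_nat_1 of_nat_add of_nat_mult)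
    then have "((real j + 1) / (real k * (real p + 1))) powr b \<le> 1"
      using kr b by (intro powr_le1) (auto simp: divide_le_eq)
    then have "((real j + 1) / (real k * (real p + 1))) powr b * m p \<le> m p"
      using quot_pos[of p] by (simp add: mult_le_cancel_right1)
    also have "m p \<le> m j" using less.prems by (rule quot_mono)
    finally show ?thesis .
  next
    case False
    define i where "i = j div k"
    have "k * i + j mod k = j" unfolding i_def by (rule mult_div_mod_eq)
    moreover have "j mod k < k" using k by simp
    moreover have "k * (i + 1) = k * i + k" by simp
    ultimately have "j + 1 \<le> k * (i + 1)" "k * i \<le> j" by linarith+
    have "p + 1 \<le> i"
    proof (rule ccontr)
      assume "\<not> p + 1 \<le> i"
      then have "k * (i + 1) \<le> k * (p + 1)" by (intro mult_le_mono2) simp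
      then show False using \<open>j + 1 \<le> k * (i + 1)\<close> False by linarith
    qed
    moreover have "i < j"
    proof -
      have "2 * i \<le> k * i" using k by simp
      then show ?thesis using \<open>k * i \<le> j\<close> \<open>p + 1 \<le> i\<close> by linarith
    qed
    ultimately have IH: "((real i + 1) / (real k * (real p + 1))) powr b * m p \<le> m i"
      using less.IH by simp
    have "real j + 1 \<le> real k * (real i + 1)"
      using \<open>j + 1 \<le> k * (i + 1)\<close> by (metis of_nat_le_iff of_nat_1 of_nat_add of_nat_mult)
    then have "(real j + 1) / (real k * (real p + 1)) \<le> (real k * (real i + 1)) / (real k * (real p + 1))"
      using kr by (intro divide_right_mono) auto
    also have "\<dots> = (real i + 1) / (real p + 1)" using kr by simp
    finally have "(real j + 1) / (real k * (real p + 1)) \<le> (real i + 1) / (real p + 1)" .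
    then have "((real j + 1) / (real k * (real p + 1))) powr b * m p \<le> ((real i + 1) / (real p + 1)) powr b * m p"
      using b quot_pos[of p] by (intro mult_right_mono powr_mono2) auto
    also have "((real i + 1) / (real p + 1)) powr b = 2 * ((real i + 1) / (real k * (real p + 1))) powr b"
      using kr b powr_mult[of "real k" "(real i + 1) / (real k * (real p + 1))" b] by simp
    also have "2 * ((real i + 1) / (real k * (real p + 1))) powr b * m p \<le> 2 * m i" using IH by simp
    also have "\<dots> \<le> m (k * i)" using expand \<open>p0 \<le> p\<close> \<open>p + 1 \<le> i\<close> by simp
    also have "\<dots> \<le> m j" using \<open>k * i \<le> j\<close> by (rule quot_mono)
    finally show ?thesis .
  qed
qed

lemma expanding_imp_quot_eventually_grows_at_least:
  assumes quot_expanding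
  shows "\<exists>b>0. quot_eventually_grows_at_least b"
proof -
  obtain k p0 where k: "k \<ge> 2" and expand: "\<And>p. p \<ge> p0 \<Longrightarrow> 2 * m p \<le> m (k * p)"
    using assms unfolding quot_expanding_def by blast
  define b where "b = log (real k) 2"
  have "b > 0" "real k powr b = 2" using k unfolding b_def by simp_all
  have "1 / 2 * ((real j + 1) / (real p + 1)) powr b * m p \<le> m j" if "p0 \<le> p" "p \<le> j" for p j
  proof -
    have "1 / 2 * ((real j + 1) / (real p + 1)) powr b = ((real j + 1) / (real k * (real p + 1))) powr b"
      using \<open>real k powr b = 2\<close> k powr_mult[of "real k" "real p + 1" b] by (simp add: powr_divide)
    then show ?thesis
      using quot_ge_of_expanding[OF k expand \<open>b > 0\<close> \<open>real k powr b = 2\<close> that] by simp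
  qed
  then have "quot_eventually_grows_at_least b"
    unfolding quot_eventually_grows_at_least_def by (intro exI[of _ "1 / 2"]) auto
  then show ?thesis using \<open>b > 0\<close> by blast
qed

lemma quot_eventually_grows_at_least_imp_expanding:
  assumes "quot_eventually_grows_at_least b" "b > 0"
  shows quot_expanding
proof -
  obtain D k0 where "D > 0" and D: "\<And>k j. k0 \<le> k \<Longrightarrow> k \<le> j \<Longrightarrow>
      D * ((real j + 1) / (real k + 1)) powr b * m k \<le> m j"
    using assms unfolding quot_eventually_grows_at_least_def by blast
  define c where "c = (2 / D) powr (1 / b)"
  define k where "k = 2 * nat \<lceil>c\<rceil> + 2"
  have "k \<ge> 2" unfolding k_def by simp
  have "c \<le> real (nat \<lceil>c\<rceil>)" by (rule real_nat_ceiling_ge)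
  then have "c \<le> real k / 2" unfolding k_def by simp
  then have "(2 / D) \<le> (real k / 2) powr b"
    using \<open>D > 0\<close> \<open>b > 0\<close> powr_mono2[of b c "real k / 2"] by (simp add: c_def powr_powr)
  then have kb: "2 \<le> D * (real k / 2) powr b" using \<open>D > 0\<close> by (simp add: field_simps)
  have "2 * m p \<le> m (k * p)" if p: "p \<ge> max k0 1" for p
  proof -
    have "real k * (real p + 1) \<le> 2 * (real k * real p + 1)"
      using p mult_left_mono[of 1 "real p" "real k"] by (simp add: algebra_simps)
    then have ratio: "real k / 2 \<le> (real (k * p) + 1) / (real p + 1)" by (simp add: field_simps)
    have "2 * m p \<le> D * (real k / 2) powr b * m p" using kb quot_pos[of p] by simp
    also have "\<dots> \<le> D * ((real (k * p) + 1) / (real p + 1)) powr b * m p"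
      using ratio \<open>D > 0\<close> \<open>b > 0\<close> quot_pos[of p] \<open>k \<ge> 2\<close>
      by (intro mult_right_mono mult_left_mono powr_mono2) auto
    also have "\<dots> \<le> m (k * p)" using p \<open>k \<ge> 2\<close> by (intro D) auto
    finally show ?thesis .
  qed
  then show ?thesis unfolding quot_expanding_def using \<open>k \<ge> 2\<close> by blast
qed

definition snq_term :: "nat \<Rightarrow> real" where
  "snq_term q = 1 / ((real q + 1) * m q)"

lemma snq_term_pos: "snq_term q > 0"
  unfolding snq_term_def using quot_pos[of q] by simp

lemma strongly_nonquasianalytic_iff:
  "strongly_nonquasianalytic M \<longleftrightarrow>
     summable snq_term \<and> (\<exists>B>0. \<forall>p. (\<Sum>j. snq_term (p + j)) \<le> B / m p)"
proof -
  have term_eq: "M q / ((real q + 1) * M (Suc q)) = snq_term q" for q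
    unfolding snq_term_def quot_def using M_pos[of q] by simp
  have ratio: "B * (M p / M (Suc p)) = B / m p" for B p
    unfolding quot_def by simp
  show ?thesis unfolding strongly_nonquasianalytic_def term_eq ratio by simp
qed

lemma quot_ge_of_snq:
  assumes "summable snq_term" "B > 0" and tail: "\<And>p. (\<Sum>j. snq_term (p + j)) \<le> B / m p"
    and "p \<ge> 1"
  shows "real n / (2 * B) * m p \<le> m (2 ^ n * p)"
proof -
  have "(\<Sum>q\<in>{p..<2 ^ n * p}. snq_term q) = (\<Sum>j<2 ^ n * p - p. snq_term (p + j))"
    by (simp add: sum_lessThan_shift)
  also have "\<dots> \<le> (\<Sum>j. snq_term (p + j))"
    using summable_ignore_initial_segment[OF assms(1), of p] snq_term_pos
    by (intro sum_le_suminf) (auto simp: add.commute less_imp_le)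
  also have "\<dots> \<le> B / m p" by (rule tail)
  finally have upper: "(\<Sum>q\<in>{p..<2 ^ n * p}. snq_term q) \<le> B / m p" .
  have "(\<Sum>q\<in>{p..<2 ^ n * p}. 1 / (real q + 1)) / m (2 ^ n * p)
      = (\<Sum>q\<in>{p..<2 ^ n * p}. 1 / ((real q + 1) * m (2 ^ n * p)))"
    by (simp add: sum_divide_distrib)
  also have "\<dots> \<le> (\<Sum>q\<in>{p..<2 ^ n * p}. snq_term q)"
  proof (intro sum_mono)
    fix q assume "q \<in> {p..<2 ^ n * p}"
    then have "(real q + 1) * m q \<le> (real q + 1) * m (2 ^ n * p)" using quot_mono by simp
    then show "1 / ((real q + 1) * m (2 ^ n * p)) \<le> snq_term q"
      unfolding snq_term_def using quot_pos[of q] by (intro divide_left_mono) auto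
  qed
  finally have "(\<Sum>q\<in>{p..<2 ^ n * p}. 1 / (real q + 1)) / m (2 ^ n * p) \<le> B / m p"
    using upper by linarith
  moreover have "real n / 2 / m (2 ^ n * p) \<le> (\<Sum>q\<in>{p..<2 ^ n * p}. 1 / (real q + 1)) / m (2 ^ n * p)"
    using harmonic_sum_doubling_blocks[OF \<open>p \<ge> 1\<close>, of n] quot_pos[of "2 ^ n * p"]
    by (intro divide_right_mono) auto
  ultimately have "real n / 2 / m (2 ^ n * p) \<le> B / m p" by linarith
  then show ?thesis using quot_pos[of p] quot_pos[of "2 ^ n * p"] \<open>B > 0\<close> by (simp add: field_simps)
qed

lemma strongly_nonquasianalytic_imp_expanding:
  assumes "strongly_nonquasianalytic M"
  shows quot_expanding
proof -
  obtain B where "summable snq_term" "B > 0" and tail: "\<And>p. (\<Sum>j. snq_term (p + j)) \<le> B / m p"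
    using assms unfolding strongly_nonquasianalytic_iff by blast
  define n where "n = nat \<lceil>4 * B\<rceil> + 1"
  have "real n \<ge> 4 * B" unfolding n_def by linarith
  then have "2 \<le> real n / (2 * B)" using \<open>B > 0\<close> by (simp add: field_simps)
  have "2 * m p \<le> m (2 ^ n * p)" if "p \<ge> 1" for p
  proof -
    have "2 * m p \<le> real n / (2 * B) * m p"
      using \<open>2 \<le> real n / (2 * B)\<close> quot_pos[of p] by (intro mult_right_mono) auto
    also have "\<dots> \<le> m (2 ^ n * p)" by (rule quot_ge_of_snq[OF \<open>summable snq_term\<close> \<open>B > 0\<close> tail that])
    finally show ?thesis .
  qed
  moreover have "(2::nat) ^ n \<ge> 2" unfolding n_def by simp
  ultimately show ?thesis unfolding quot_expanding_def by blast
qed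

context
  fixes k p0 :: nat
  assumes k: "k \<ge> 2" and p0: "p0 \<ge> 1" and expand: "\<And>p. p \<ge> p0 \<Longrightarrow> 2 * m p \<le> m (k * p)"
begin

text \<open>On \<open>[k ^ i p, k ^ (i + 1) p)\<close> the quotients are at least \<open>2 ^ i m p\<close>.\<close>

lemma snq_block_le:
  assumes "p \<ge> p0"
  shows "(\<Sum>q\<in>{k ^ i * p..<k ^ Suc i * p}. snq_term q) \<le> real k / (2 ^ i * m p)"
proof -
  have kip: "real (k ^ i * p) > 0" using k assms p0 by simp
  define bd where "bd = 1 / (real (k ^ i * p) * (2 ^ i * m p))"
  have "snq_term q \<le> bd" if q: "q \<in> {k ^ i * p..<k ^ Suc i * p}" for q
  proof -
    have "real (k ^ i * p) \<le> real q + 1" using q by (simp del: of_nat_mult)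
    moreover have "2 ^ i * m p \<le> m q"
      using quot_iterate_ge[of k 2 p0 p i] k expand assms quot_mono[of "k ^ i * p" q] q by simp
    ultimately have "real (k ^ i * p) * (2 ^ i * m p) \<le> (real q + 1) * m q"
      using quot_pos[of p] by (intro mult_mono) auto
    then show ?thesis
      unfolding snq_term_def bd_def using kip quot_pos[of p] quot_pos[of q] by (intro divide_left_mono) auto
  qed
  then have "(\<Sum>q\<in>{k ^ i * p..<k ^ Suc i * p}. snq_term q) \<le> real (card {k ^ i * p..<k ^ Suc i * p}) * bd"
    by (intro sum_bounded_above) auto
  also have "\<dots> \<le> real (k ^ Suc i * p) * bd"
  proof (rule mult_right_mono)
    show "real (card {k ^ i * p..<k ^ Suc i * p}) \<le> real (k ^ Suc i * p)"
      by (simp only: of_nat_le_iff) simp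
    show "0 \<le> bd" using kip quot_pos[of p] unfolding bd_def by simp
  qed
  also have "\<dots> = real k / (2 ^ i * m p)"
    unfolding bd_def using kip quot_pos[of p] k p0 assms by (simp add: field_simps)
  finally show ?thesis .
qed

lemma snq_partial_sum_le:
  assumes "p \<ge> p0"
  shows "(\<Sum>j<L. snq_term (p + j)) \<le> 2 * real k / m p"
proof -
  have geometric: "(\<Sum>q\<in>{p..<k ^ n * p}. snq_term q) \<le> (2 * real k - 2 * real k / 2 ^ n) / m p" for n
  proof (induction n)
    case (Suc n)
    have "p \<le> k ^ n * p" "k ^ n * p \<le> k ^ Suc n * p" using k by simp_all
    then have "(\<Sum>q\<in>{p..<k ^ Suc n * p}. snq_term q)
        = (\<Sum>q\<in>{p..<k ^ n * p}. snq_term q) + (\<Sum>q\<in>{k ^ n * p..<k ^ Suc n * p}. snq_term q)"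
      by (simp add: sum.atLeastLessThan_concat)
    also have "\<dots> \<le> (2 * real k - 2 * real k / 2 ^ n) / m p + real k / (2 ^ n * m p)"
      using Suc snq_block_le[OF assms, of n] by linarith
    also have "\<dots> = (2 * real k - 2 * real k / 2 ^ Suc n) / m p" using quot_pos[of p] by (simp add: field_simps)
    finally show ?case .
  qed simp
  have "p + L < 2 ^ (p + L)" by (rule less_exp)
  also have "(2::nat) ^ (p + L) \<le> k ^ (p + L)" using k by (intro power_mono) auto
  also have "\<dots> \<le> k ^ (p + L) * p" using assms p0 by simp
  finally have "{p..<p + L} \<subseteq> {p..<k ^ (p + L) * p}" by auto
  then have "(\<Sum>j<L. snq_term (p + j)) \<le> (\<Sum>q\<in>{p..<k ^ (p + L) * p}. snq_term q)"
    unfolding sum_lessThan_shift using snq_term_pos by (intro sum_mono2) (auto simp: less_imp_le)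
  also have "\<dots> \<le> (2 * real k - 2 * real k / 2 ^ (p + L)) / m p" by (rule geometric)
  also have "\<dots> \<le> 2 * real k / m p" using quot_pos[of p] by (intro divide_right_mono) auto
  finally show ?thesis .
qed

lemma snq_tail_le:
  assumes "p \<ge> p0"
  shows "summable (\<lambda>j. snq_term (p + j))" "(\<Sum>j. snq_term (p + j)) \<le> 2 * real k / m p"
proof -
  show "summable (\<lambda>j. snq_term (p + j))"
    using snq_partial_sum_le[OF assms] snq_term_pos
    by (intro summableI_nonneg_bounded) (auto simp: less_imp_le)
  then show "(\<Sum>j. snq_term (p + j)) \<le> 2 * real k / m p"
    using snq_partial_sum_le[OF assms] by (intro suminf_le_const)
qed

end

lemma expanding_imp_strongly_nonquasianalytic:
  assumes quot_expanding
  shows "strongly_nonquasianalytic M"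
proof -
  obtain k p1 where k: "k \<ge> 2" and expand1: "\<And>p. p \<ge> p1 \<Longrightarrow> 2 * m p \<le> m (k * p)"
    using assms unfolding quot_expanding_def by blast
  define p0 where "p0 = max p1 1"
  have "p0 \<ge> 1" and expand: "\<And>p. p \<ge> p0 \<Longrightarrow> 2 * m p \<le> m (k * p)"
    using expand1 unfolding p0_def by auto
  have tail_summable: "summable (\<lambda>j. snq_term (p + j))"
    and tail_le: "(\<Sum>j. snq_term (p + j)) \<le> 2 * real k / m p" if "p \<ge> p0" for p
    using snq_tail_le[of k p0 p] k \<open>p0 \<ge> 1\<close> expand that by blast+
  have "summable snq_term"
    using tail_summable[of p0] by (simp add: add.commute summable_iff_shift)
  define S0 where "S0 = (\<Sum>q<p0. snq_term q)"
  have "S0 \<ge> 0" unfolding S0_def using snq_term_pos by (intro sum_nonneg) (auto simp: less_imp_le)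
  define B where "B = 2 * real k + S0 * m p0"
  have "B > 0" unfolding B_def using k \<open>S0 \<ge> 0\<close> quot_pos[of p0] by (intro add_pos_nonneg) auto
  have "(\<Sum>j. snq_term (p + j)) \<le> B / m p" for p
  proof (cases "p \<ge> p0")
    case True
    then have "(\<Sum>j. snq_term (p + j)) \<le> 2 * real k / m p" by (rule tail_le)
    also have "\<dots> \<le> B / m p" unfolding B_def using \<open>S0 \<ge> 0\<close> quot_pos[of p] quot_pos[of p0]
      by (intro divide_right_mono) auto
    finally show ?thesis .
  next
    case False
    define d where "d = p0 - p"
    have "summable (\<lambda>j. snq_term (p + j))"
      using \<open>summable snq_term\<close> by (simp add: add.commute summable_iff_shift)
    then have "(\<Sum>j. snq_term (p + j)) = (\<Sum>j. snq_term (p + (j + d))) + (\<Sum>i<d. snq_term (p + i))"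
      by (rule suminf_split_initial_segment)
    also have "(\<lambda>j. snq_term (p + (j + d))) = (\<lambda>j. snq_term (p0 + j))"
      using False unfolding d_def by (auto simp: algebra_simps)
    also have "(\<Sum>i<d. snq_term (p + i)) \<le> S0"
      unfolding S0_def sum_lessThan_shift using snq_term_pos False
      by (intro sum_mono2) (auto simp: d_def less_imp_le)
    also have "(\<Sum>j. snq_term (p0 + j)) \<le> 2 * real k / m p0" by (rule tail_le) simp
    also have "2 * real k / m p0 + S0 = B / m p0" unfolding B_def using quot_pos[of p0] by (simp add: field_simps)
    also have "B / m p0 \<le> B / m p" using \<open>B > 0\<close> quot_pos[of p] quot_mono[of p p0] False
      by (intro divide_left_mono) auto
    finally show ?thesis by simp
  qed
  then show ?thesis unfolding strongly_nonquasianalytic_iff using \<open>summable snq_term\<close> \<open>B > 0\<close> by blast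
qed

lemma strongly_regular_iff: "strongly_regular M \<longleftrightarrow> quot_doubling \<and> quot_expanding"
proof -
  have "log_convex M" using weight_seq unfolding weight_seq_def log_convex_def by blast
  then show ?thesis
    unfolding strongly_regular_def moderate_growth_iff_doubling
    using strongly_nonquasianalytic_imp_expanding expanding_imp_strongly_nonquasianalytic by blast
qed

lemma quot_ratio_le_of_quot_grows:
  assumes "quot_grows_at_most a" "a \<ge> 0"
  shows "\<exists>C>0. \<forall>l>0. \<forall>p. m (nat \<lfloor>l * real p\<rfloor>) / m p \<le> C * (l + 1) powr a"
proof -
  obtain C where "C > 0" and C: "\<And>k j. k \<le> j \<Longrightarrow> m j \<le> C * ((real j + 1) / (real k + 1)) powr a * m k"
    using assms unfolding quot_grows_at_most_def by blast
  define C' where "C' = max C 1"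
  have "m (nat \<lfloor>l * real p\<rfloor>) / m p \<le> C' * (l + 1) powr a" if "l > 0" for l p
  proof -
    define j where "j = nat \<lfloor>l * real p\<rfloor>"
    have "1 \<le> (l + 1) powr a" using that assms(2) by (simp add: ge_one_powr_ge_zero)
    then have "1 \<le> C' * (l + 1) powr a" unfolding C'_def using mult_mono[of 1 "max C 1" 1] by simp
    show ?thesis
    proof (cases "j \<le> p")
      case True
      then have "m j / m p \<le> 1" using quot_mono quot_pos[of p] by simp
      then show ?thesis using \<open>1 \<le> C' * (l + 1) powr a\<close> unfolding j_def by linarith
    next
      case False
      have "real j \<le> l * real p" unfolding j_def using that by (simp add: of_nat_nat)
      then have "(real j + 1) / (real p + 1) \<le> l + 1"
        using that by (simp add: divide_le_eq algebra_simps)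
      have "m j \<le> C * ((real j + 1) / (real p + 1)) powr a * m p" using C[of p j] False by simp
      also have "\<dots> \<le> C' * (l + 1) powr a * m p"
        using \<open>(real j + 1) / (real p + 1) \<le> l + 1\<close> \<open>C > 0\<close> quot_pos[of p] assms(2) unfolding C'_def
        by (intro mult_right_mono mult_mono powr_mono2) auto
      finally show ?thesis unfolding j_def using quot_pos[of p] by (simp add: divide_le_eq)
    qed
  qed
  moreover have "C' > 0" unfolding C'_def by simp
  ultimately show ?thesis by blast
qed

lemma O_reg_var_iff_doubling: "O_reg_var m \<longleftrightarrow> quot_doubling"
proof
  assume "O_reg_var m"
  then have "Limsup sequentially (\<lambda>p. ereal (m (nat \<lfloor>3 * real p\<rfloor>) / m p)) < \<infinity>"
    unfolding O_reg_var_def by simp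
  then obtain R where R: "Limsup sequentially (\<lambda>p. ereal (m (nat \<lfloor>3 * real p\<rfloor>) / m p)) < ereal R"
    using ereal_dense2 by blast
  obtain p0 where p0: "\<And>p. p \<ge> p0 \<Longrightarrow> ereal (m (nat \<lfloor>3 * real p\<rfloor>) / m p) < ereal R"
    using Limsup_lessD[OF R] unfolding eventually_sequentially by blast
  have "m (2 * p + 1) \<le> R * m p" if "p \<ge> max p0 1" for p
  proof -
    have "nat \<lfloor>3 * real p\<rfloor> = 3 * p" by linarith
    then have "m (3 * p) / m p < R" using p0[of p] that by simp
    have "m (2 * p + 1) \<le> m (3 * p)" using that by (intro quot_mono) simp
    also have "\<dots> \<le> R * m p" using \<open>m (3 * p) / m p < R\<close> quot_pos[of p] by (simp add: divide_less_eq)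
    finally show ?thesis .
  qed
  then show quot_doubling by (rule quot_doubling_of_eventually)
next
  assume quot_doubling
  then obtain a where "a > 0" "quot_grows_at_most a" using doubling_imp_quot_grows_at_most by blast
  then obtain C where C: "\<And>l p. l > 0 \<Longrightarrow> m (nat \<lfloor>l * real p\<rfloor>) / m p \<le> C * (l + 1) powr a"
    using quot_ratio_le_of_quot_grows[OF \<open>quot_grows_at_most a\<close> less_imp_le[OF \<open>a > 0\<close>]] by blast
  have "Limsup sequentially (\<lambda>p. ereal (m (nat \<lfloor>l * real p\<rfloor>) / m p)) < \<infinity>" if "l > 0" for l
  proof -
    have "Limsup sequentially (\<lambda>p. ereal (m (nat \<lfloor>l * real p\<rfloor>) / m p)) \<le> ereal (C * (l + 1) powr a)"
      using C[OF that] by (intro Limsup_bounded) auto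
    then show ?thesis using le_less_trans[of _ "ereal (C * (l + 1) powr a)" \<infinity>] by simp
  qed
  then show "O_reg_var m" unfolding O_reg_var_def by blast
qed

lemma ratio_bounds_imp_doubling_expanding:
  fixes k :: nat
  assumes k: "k \<ge> 2"
    and lower: "1 < Liminf sequentially (\<lambda>p. ereal (m (k * p) / m p))"
    and upper: "Limsup sequentially (\<lambda>p. ereal (m (k * p) / m p)) < \<infinity>"
  shows "quot_doubling \<and> quot_expanding"
proof -
  obtain d where "1 < ereal d" and d: "ereal d < Liminf sequentially (\<lambda>p. ereal (m (k * p) / m p))"
    using ereal_dense2[OF lower] by blast
  obtain R where R: "Limsup sequentially (\<lambda>p. ereal (m (k * p) / m p)) < ereal R"
    using ereal_dense2[OF upper] by blast
  obtain p0 where p0: "\<And>p. p \<ge> p0 \<Longrightarrow> ereal d < ereal (m (k * p) / m p) \<and> ereal (m (k * p) / m p) < ereal R"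
    using eventually_conj[OF less_LiminfD[OF d] Limsup_lessD[OF R]] unfolding eventually_sequentially by blast
  have "d > 1" using \<open>1 < ereal d\<close> by simp
  have lo: "d * m p \<le> m (k * p)" and up: "m (k * p) \<le> R * m p" if "p \<ge> p0" for p
    using p0[OF that] quot_pos[of p] by (simp_all add: field_simps)
  obtain n where "2 < d ^ n" using real_arch_pow[OF \<open>d > 1\<close>] by blast
  then have "n \<ge> 1" by (cases n) auto
  have "2 * m p \<le> m (k ^ n * p)" if "p \<ge> p0" for p
  proof -
    have "2 * m p \<le> d ^ n * m p" using \<open>2 < d ^ n\<close> quot_pos[of p] by simp
    also have "\<dots> \<le> m (k ^ n * p)" using quot_iterate_ge[of k d p0 p n] k \<open>d > 1\<close> lo that by simp
    finally show ?thesis .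
  qed
  moreover have "k ^ n \<ge> 2"
  proof -
    have "k ^ 1 \<le> k ^ n" using \<open>n \<ge> 1\<close> k by (intro power_increasing) auto
    then show ?thesis using k by simp
  qed
  ultimately have quot_expanding unfolding quot_expanding_def by blast
  have "0 < R * m p0" using up[of p0] quot_pos[of "k * p0"] by linarith
  then have "R > 0" using quot_pos[of p0] by (simp add: zero_less_mult_iff)
  have "m (2 * p + 1) \<le> (R * R) * m p" if "p \<ge> max p0 1" for p
  proof -
    have "2 * (2 * p) \<le> k * (2 * p)" using k by (intro mult_le_mono1)
    then have "m (2 * p + 1) \<le> m (k * (2 * p))" using that by (intro quot_mono) linarith
    also have "\<dots> \<le> R * m (2 * p)" using up that by simp
    also have "\<dots> \<le> R * m (k * p)" using k \<open>R > 0\<close> by (intro mult_left_mono quot_mono) auto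
    also have "\<dots> \<le> R * (R * m p)" using up that \<open>R > 0\<close> by (intro mult_left_mono) auto
    finally show ?thesis by (simp add: mult.assoc)
  qed
  then have quot_doubling by (rule quot_doubling_of_eventually)
  with \<open>quot_expanding\<close> show ?thesis by blast
qed

lemma doubling_expanding_imp_ratio_bounds:
  assumes quot_doubling quot_expanding
  shows "\<exists>k::nat. k \<ge> 2 \<and>
    1 < Liminf sequentially (\<lambda>p. ereal (m (k * p) / m p)) \<and>
    Liminf sequentially (\<lambda>p. ereal (m (k * p) / m p)) \<le> Limsup sequentially (\<lambda>p. ereal (m (k * p) / m p)) \<and>
    Limsup sequentially (\<lambda>p. ereal (m (k * p) / m p)) < \<infinity>"
proof -
  obtain k :: nat and p0 where "k \<ge> 2" and expand: "\<And>p. p \<ge> p0 \<Longrightarrow> 2 * m p \<le> m (k * p)"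
    using assms(2) unfolding quot_expanding_def by blast
  obtain a where "a > 0" "quot_grows_at_most a" using doubling_imp_quot_grows_at_most assms(1) by blast
  then obtain C where C: "\<And>l p. l > 0 \<Longrightarrow> m (nat \<lfloor>l * real p\<rfloor>) / m p \<le> C * (l + 1) powr a"
    using quot_ratio_le_of_quot_grows[OF \<open>quot_grows_at_most a\<close> less_imp_le[OF \<open>a > 0\<close>]] by blast
  have "nat \<lfloor>real k * real p\<rfloor> = k * p" for p
    by (metis floor_of_nat nat_int of_nat_mult)
  then have up: "m (k * p) / m p \<le> C * (real k + 1) powr a" for p
    using C[of "real k" p] \<open>k \<ge> 2\<close> by simp
  let ?Li = "Liminf sequentially (\<lambda>p. ereal (m (k * p) / m p))"
  let ?Ls = "Limsup sequentially (\<lambda>p. ereal (m (k * p) / m p))"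
  have "ereal 2 \<le> ?Li"
    using expand quot_pos by (intro Liminf_bounded) (auto simp: eventually_sequentially field_simps)
  then have "1 < ?Li" using less_le_trans[of 1 "ereal 2"] by simp
  moreover have "?Ls \<le> ereal (C * (real k + 1) powr a)" using up by (intro Limsup_bounded) auto
  then have "?Ls < \<infinity>" using le_less_trans[of _ "ereal (C * (real k + 1) powr a)" \<infinity>] by simp
  moreover have "?Li \<le> ?Ls" by (intro Liminf_le_Limsup) simp
  ultimately show ?thesis using \<open>k \<ge> 2\<close> by blast
qed

lemma ratio_bounds_iff:
  "(\<exists>k::nat. k \<ge> 2 \<and>
    1 < Liminf sequentially (\<lambda>p. ereal (m (k * p) / m p)) \<and>
    Liminf sequentially (\<lambda>p. ereal (m (k * p) / m p)) \<le> Limsup sequentially (\<lambda>p. ereal (m (k * p) / m p)) \<and>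
    Limsup sequentially (\<lambda>p. ereal (m (k * p) / m p)) < \<infinity>) \<longleftrightarrow> quot_doubling \<and> quot_expanding"
  using ratio_bounds_imp_doubling_expanding doubling_expanding_imp_ratio_bounds by blast

section \<open>Indices of the counting function and of the associated function\<close>

text \<open>The counting function is the inverse of \<open>j \<mapsto> m j\<close>; hence a power bound for \<open>m\<close>
  with exponent \<open>b\<close> turns into one for \<open>\<nu>\<^sub>m\<close> with exponent \<open>1 / b\<close>, and conversely.\<close>

lemma nu_grows_at_most_of_quot:
  assumes "quot_eventually_grows_at_least b" "b > 0"
  shows "grows_at_most (nu_m m) (1 / b)"
proof -
  obtain D k0 where "D > 0" and D: "\<And>k j. k0 \<le> k \<Longrightarrow> k \<le> j \<Longrightarrow>
      D * ((real j + 1) / (real k + 1)) powr b * m k \<le> m j"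
    using assms(1) unfolding quot_eventually_grows_at_least_def by blast
  define C where "C = max 1 (2 * D powr (- (1 / b)))"
  have "C \<ge> 1" unfolding C_def by simp
  have "nu_m m (l * t) \<le> C * l powr (1 / b) * nu_m m t" if t: "t \<ge> max (m k0) (m 0)" and l: "l \<ge> 1" for t l
  proof -
    define p where "p = nu_nat t"
    define q where "q = nu_nat (l * t)"
    have "t > 0" using t quot_pos[of 0] by linarith
    have "k0 < p" unfolding p_def using t less_nu_nat_iff[of k0 t] by simp
    have "p \<le> q" unfolding p_def q_def using l \<open>t > 0\<close> by (intro nu_nat_mono) simp
    have lb: "l powr (1 / b) \<ge> 1" using l assms(2) by (simp add: ge_one_powr_ge_zero)
    have "real q \<le> C * l powr (1 / b) * real p"
    proof (cases "q = p")
      case True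
      then show ?thesis
        using \<open>C \<ge> 1\<close> lb mult_mono[of 1 C 1 "l powr (1 / b)"] by (simp add: mult_le_cancel_right1)
    next
      case False
      then have "p < q" using \<open>p \<le> q\<close> by simp
      have "0 < D * (real q / (real p + 1)) powr b" using \<open>D > 0\<close> \<open>p < q\<close> by simp
      then have "D * (real q / (real p + 1)) powr b * t < D * (real q / (real p + 1)) powr b * m p"
        using quot_nu_nat_gt[of t] unfolding p_def by (intro mult_strict_left_mono)
      also have "\<dots> \<le> m (q - 1)"
        using D[of p "q - 1"] \<open>k0 < p\<close> \<open>p < q\<close> by (simp add: of_nat_diff)
      also have "\<dots> \<le> l * t" using less_nu_nat_iff[of "q - 1" "l * t"] \<open>p < q\<close> unfolding q_def by simp
      finally have "(real q / (real p + 1)) powr b < l / D" using \<open>t > 0\<close> \<open>D > 0\<close> by (simp add: field_simps)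
      then have "\<not> l / D \<le> (real q / (real p + 1)) powr b" by simp
      then have "real q / (real p + 1) < (l / D) powr (1 / b)"
        using le_powr_iff_powr_inverse_le[of "real q / (real p + 1)" "l / D" b] \<open>p < q\<close> \<open>D > 0\<close> l assms(2)
        by simp
      also have "\<dots> = D powr (- (1 / b)) * l powr (1 / b)"
        by (rule powr_divide_eq_powr_minus_mult)
      finally have "real q < D powr (- (1 / b)) * l powr (1 / b) * (real p + 1)"
        by (simp add: field_simps)
      also have "\<dots> \<le> (2 * D powr (- (1 / b))) * l powr (1 / b) * real p"
        using mult_left_mono[of "real p + 1" "2 * real p" "D powr (- (1 / b)) * l powr (1 / b)"] \<open>k0 < p\<close>
        by (simp add: mult_ac)
      also have "\<dots> \<le> C * l powr (1 / b) * real p" unfolding C_def by (intro mult_right_mono) auto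
      finally show ?thesis by simp
    qed
    then show ?thesis unfolding nu_m_eq p_def q_def .
  qed
  then have "eventually (\<lambda>t. \<forall>l\<ge>1. nu_m m (l * t) \<le> C * l powr (1 / b) * nu_m m t) at_top"
    unfolding eventually_at_top_linorder by blast
  then show ?thesis unfolding grows_at_most_def using \<open>C \<ge> 1\<close> by (intro exI[of _ C]) simp
qed

lemma nu_grows_at_least_of_quot:
  assumes "quot_eventually_grows_at_most a" "a > 0"
  shows "grows_at_least (nu_m m) (1 / a)"
proof -
  obtain C k0 where "C > 0" and C: "\<And>k j. k0 \<le> k \<Longrightarrow> k \<le> j \<Longrightarrow>
      m j \<le> C * ((real j + 1) / (real k + 1)) powr a * m k"
    using assms(1) unfolding quot_eventually_grows_at_most_def by blast
  define D where "D = C powr (- (1 / a)) / 2"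
  have "D * l powr (1 / a) * nu_m m t \<le> nu_m m (l * t)"
    if t: "t \<ge> max (m (k0 + 1)) (m 0)" and l: "l \<ge> 1" for t l
  proof -
    define p where "p = nu_nat t"
    define q where "q = nu_nat (l * t)"
    have "t > 0" using t quot_pos[of 0] by linarith
    have "k0 + 1 < p" unfolding p_def using t less_nu_nat_iff[of "k0 + 1" t] by simp
    have "p \<le> q" unfolding p_def q_def using l \<open>t > 0\<close> by (intro nu_nat_mono) simp
    have "m (p - 1) \<le> t" using less_nu_nat_iff[of "p - 1" t] \<open>k0 + 1 < p\<close> unfolding p_def by simp
    have "l * m (p - 1) \<le> l * t" using \<open>m (p - 1) \<le> t\<close> l by simp
    also have "\<dots> < m q" unfolding q_def by (rule quot_nu_nat_gt)
    also have "\<dots> \<le> C * ((real q + 1) / real p) powr a * m (p - 1)"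
      using C[of "p - 1" q] \<open>k0 + 1 < p\<close> \<open>p \<le> q\<close> by (simp add: of_nat_diff)
    finally have "l < C * ((real q + 1) / real p) powr a" using quot_pos[of "p - 1"] by simp
    then have "l / C < ((real q + 1) / real p) powr a" using \<open>C > 0\<close> by (simp add: field_simps)
    then have "\<not> ((real q + 1) / real p) powr a \<le> l / C" by simp
    then have "(l / C) powr (1 / a) < (real q + 1) / real p"
      using powr_le_iff_le_powr_inverse[of "(real q + 1) / real p" "l / C" a] \<open>k0 + 1 < p\<close> \<open>C > 0\<close> l assms(2)
      by simp
    then have "C powr (- (1 / a)) * l powr (1 / a) < (real q + 1) / real p"
      by (simp only: powr_divide_eq_powr_minus_mult)
    then have "real p * (C powr (- (1 / a)) * l powr (1 / a)) < real q + 1"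
      using \<open>k0 + 1 < p\<close> by (simp add: field_simps)
    moreover have "real q + 1 \<le> 2 * real q" using \<open>k0 + 1 < p\<close> \<open>p \<le> q\<close> by simp
    ultimately have "D * l powr (1 / a) * real p \<le> real q" unfolding D_def by (simp add: field_simps)
    then show ?thesis unfolding nu_m_eq p_def q_def .
  qed
  then have "eventually (\<lambda>t. \<forall>l\<ge>1. D * l powr (1 / a) * nu_m m t \<le> nu_m m (l * t)) at_top"
    unfolding eventually_at_top_linorder by blast
  moreover have "D > 0" unfolding D_def using \<open>C > 0\<close> by simp
  ultimately show ?thesis unfolding grows_at_least_def by blast
qed

lemma quot_eventually_grows_at_least_of_nu:
  assumes "grows_at_most (nu_m m) a" "a > 0"
  shows "quot_eventually_grows_at_least (1 / a)"
proof -
  obtain C t0 where "C > 0" and C: "\<And>t l. t \<ge> t0 \<Longrightarrow> l \<ge> 1 \<Longrightarrow>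
      nu_m m (l * t) \<le> C * l powr a * nu_m m t"
    using assms(1) unfolding grows_at_most_def eventually_at_top_linorder by blast
  obtain k0 where k0: "m k0 > 2 * t0" using quot_unbounded by blast
  define D where "D = (C * 2 powr a) powr (- (1 / a))"
  have "D * ((real j + 1) / (real k + 1)) powr (1 / a) * m k \<le> m j" if k: "k0 \<le> k" "k \<le> j" for k j
  proof -
    have "m k > 2 * t0" using k0 quot_mono[OF k(1)] by simp
    define l where "l = 2 * m j / m k"
    have l: "l \<ge> 1" unfolding l_def using quot_mono[OF k(2)] quot_pos[of k] by (simp add: field_simps)
    have "l * (m k / 2) = m j" unfolding l_def using quot_pos[of k] by simp
    then have "real j + 1 \<le> C * l powr a * real (nu_nat (m k / 2))"
      using C[of "m k / 2" l] \<open>m k > 2 * t0\<close> l less_nu_nat_iff[of j "m j"] unfolding nu_m_eq by simp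
    also have "\<dots> \<le> C * l powr a * (real k + 1)"
      using nu_nat_le[of "m k / 2" k] quot_pos[of k] \<open>C > 0\<close> by (intro mult_left_mono) auto
    finally have "(real j + 1) / (real k + 1) \<le> C * l powr a" by (simp add: divide_le_eq)
    also have "l powr a = 2 powr a * (m j / m k) powr a"
      unfolding l_def using quot_pos[of j] quot_pos[of k] by (simp add: powr_mult[symmetric] mult.assoc)
    finally have "(real j + 1) / (real k + 1) / (C * 2 powr a) \<le> (m j / m k) powr a"
      using \<open>C > 0\<close> by (simp add: divide_le_eq mult_ac)
    then have "((real j + 1) / (real k + 1) / (C * 2 powr a)) powr (1 / a) \<le> m j / m k"
      using le_powr_iff_powr_inverse_le[of "m j / m k" "(real j + 1) / (real k + 1) / (C * 2 powr a)" a]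
        \<open>C > 0\<close> quot_pos[of j] quot_pos[of k] assms(2) by simp
    moreover have "((real j + 1) / (real k + 1) / (C * 2 powr a)) powr (1 / a)
        = D * ((real j + 1) / (real k + 1)) powr (1 / a)"
      unfolding D_def by (rule powr_divide_eq_powr_minus_mult)
    ultimately show ?thesis using quot_pos[of k] by (simp add: field_simps)
  qed
  moreover have "D > 0" unfolding D_def using \<open>C > 0\<close> by simp
  ultimately show ?thesis unfolding quot_eventually_grows_at_least_def by blast
qed

lemma quot_eventually_grows_at_most_of_nu:
  assumes "grows_at_least (nu_m m) b" "b > 0"
  shows "quot_eventually_grows_at_most (1 / b)"
proof -
  obtain D t0 where "D > 0" and D: "\<And>t l. t \<ge> t0 \<Longrightarrow> l \<ge> 1 \<Longrightarrow>
      D * l powr b * nu_m m t \<le> nu_m m (l * t)"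
    using assms(1) unfolding grows_at_least_def eventually_at_top_linorder by blast
  obtain k0 where k0: "m k0 > t0" using quot_unbounded by blast
  define C where "C = 2 * max 1 (D powr (- (1 / b)))"
  have "m j \<le> C * ((real j + 1) / (real k + 1)) powr (1 / b) * m k" if k: "k0 \<le> k" "k \<le> j" for k j
  proof -
    have "m k > t0" using k0 quot_mono[OF k(1)] by simp
    have "1 \<le> ((real j + 1) / (real k + 1)) powr (1 / b)" using k assms(2) by (simp add: ge_one_powr_ge_zero)
    show ?thesis
    proof (cases "2 * m k \<le> m j")
      case False
      then have "m j \<le> 2 * 1 * m k" by simp
      also have "\<dots> \<le> C * ((real j + 1) / (real k + 1)) powr (1 / b) * m k"
        unfolding C_def using \<open>1 \<le> ((real j + 1) / (real k + 1)) powr (1 / b)\<close> quot_pos[of k]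
        by (intro mult_right_mono mult_mono) auto
      finally show ?thesis .
    next
      case True
      define l where "l = m j / (2 * m k)"
      have l: "l \<ge> 1" unfolding l_def using True quot_pos[of k] by (simp add: field_simps)
      have "l * m k = m j / 2" unfolding l_def using quot_pos[of k] by simp
      have "D * l powr b * (real k + 1) \<le> D * l powr b * real (nu_nat (m k))"
        using less_nu_nat_iff[of k "m k"] \<open>D > 0\<close> by (intro mult_left_mono) auto
      also have "\<dots> \<le> real (nu_nat (m j / 2))"
        using D[of "m k" l] \<open>m k > t0\<close> l \<open>l * m k = m j / 2\<close> unfolding nu_m_eq by simp
      also have "\<dots> \<le> real j + 1" using nu_nat_le[of "m j / 2" j] quot_pos[of j] by simp
      finally have "l powr b \<le> (real j + 1) / (real k + 1) / D"
        using \<open>D > 0\<close> by (simp add: le_divide_eq mult_ac)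
      then have "l \<le> ((real j + 1) / (real k + 1) / D) powr (1 / b)"
        using powr_le_iff_le_powr_inverse[of l "(real j + 1) / (real k + 1) / D" b] l \<open>D > 0\<close> assms(2)
        by simp
      also have "\<dots> = D powr (- (1 / b)) * ((real j + 1) / (real k + 1)) powr (1 / b)"
        by (rule powr_divide_eq_powr_minus_mult)
      finally have "m j \<le> 2 * D powr (- (1 / b)) * ((real j + 1) / (real k + 1)) powr (1 / b) * m k"
        unfolding l_def using quot_pos[of k] by (simp add: field_simps)
      also have "\<dots> \<le> C * ((real j + 1) / (real k + 1)) powr (1 / b) * m k"
        unfolding C_def using quot_pos[of k] by (intro mult_right_mono) auto
      finally show ?thesis .
    qed
  qed
  moreover have "C > 0" unfolding C_def by simp
  ultimately show ?thesis unfolding quot_eventually_grows_at_most_def by blast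
qed

lemma nu_grows_at_most_of_seq_step:
  "grows_at_least (seq_step m) b \<Longrightarrow> b > 0 \<Longrightarrow> grows_at_most (nu_m m) (1 / b)"
  using quot_eventually_grows_at_least_of_seq_step nu_grows_at_most_of_quot by blast

lemma nu_grows_at_least_of_seq_step:
  "grows_at_most (seq_step m) a \<Longrightarrow> a > 0 \<Longrightarrow> grows_at_least (nu_m m) (1 / a)"
  using quot_eventually_grows_at_most_of_seq_step nu_grows_at_least_of_quot by blast

lemma seq_step_grows_at_least_of_nu:
  "grows_at_most (nu_m m) a \<Longrightarrow> a > 0 \<Longrightarrow> grows_at_least (seq_step m) (1 / a)"
  using quot_eventually_grows_at_least_of_nu seq_step_grows_at_least_of_quot by simp

lemma seq_step_grows_at_most_of_nu:
  "grows_at_least (nu_m m) b \<Longrightarrow> b > 0 \<Longrightarrow> grows_at_most (seq_step m) (1 / b)"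
  using quot_eventually_grows_at_most_of_nu seq_step_grows_at_most_of_quot by simp

lemma doubling_imp_quot_eventually_grows_at_most:
  assumes quot_doubling
  shows "\<exists>a>0. quot_eventually_grows_at_most a"
  using doubling_imp_quot_grows_at_most[OF assms]
  unfolding quot_grows_at_most_def quot_eventually_grows_at_most_def by blast

lemma seq_step_grows_at_most_iff: "(\<exists>a. grows_at_most (seq_step m) a) \<longleftrightarrow> quot_doubling"
proof
  assume "\<exists>a. grows_at_most (seq_step m) a"
  then show quot_doubling
    using quot_eventually_grows_at_most_of_seq_step quot_eventually_grows_at_most_imp_doubling by blast
next
  assume quot_doubling
  then obtain a where "a > 0" "quot_eventually_grows_at_most a"
    using doubling_imp_quot_eventually_grows_at_most by blast
  then show "\<exists>a. grows_at_most (seq_step m) a"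
    using seq_step_grows_at_most_of_quot less_imp_le by blast
qed

lemma seq_step_grows_at_least_iff: "(\<exists>b>0. grows_at_least (seq_step m) b) \<longleftrightarrow> quot_expanding"
proof
  assume "\<exists>b>0. grows_at_least (seq_step m) b"
  then show quot_expanding
    using quot_eventually_grows_at_least_of_seq_step quot_eventually_grows_at_least_imp_expanding by blast
next
  assume quot_expanding
  then obtain b where "b > 0" "quot_eventually_grows_at_least b"
    using expanding_imp_quot_eventually_grows_at_least by blast
  then show "\<exists>b>0. grows_at_least (seq_step m) b"
    using seq_step_grows_at_least_of_quot less_imp_le by blast
qed

lemma nu_growth_iff:
  "(\<exists>a. grows_at_most (nu_m m) a) \<and> (\<exists>b>0. grows_at_least (nu_m m) b) \<longleftrightarrow>
     quot_doubling \<and> quot_expanding"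
proof
  assume "(\<exists>a. grows_at_most (nu_m m) a) \<and> (\<exists>b>0. grows_at_least (nu_m m) b)"
  then obtain a b where a: "grows_at_most (nu_m m) a" and "b > 0" "grows_at_least (nu_m m) b" by blast
  have "grows_at_most (nu_m m) (max a 1)"
    using grows_at_most_mono[OF a _ eventually_nu_m_pos] by simp
  then have "grows_at_least (seq_step m) (1 / max a 1)"
    by (rule seq_step_grows_at_least_of_nu) simp
  then have quot_expanding using seq_step_grows_at_least_iff by force
  moreover have "grows_at_most (seq_step m) (1 / b)"
    using seq_step_grows_at_most_of_nu \<open>b > 0\<close> \<open>grows_at_least (nu_m m) b\<close> by blast
  then have quot_doubling using seq_step_grows_at_most_iff by blast
  ultimately show "quot_doubling \<and> quot_expanding" by blast
next
  assume "quot_doubling \<and> quot_expanding"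
  then obtain a b where "a > 0" "grows_at_most (seq_step m) a" "b > 0" "grows_at_least (seq_step m) b"
    using doubling_imp_quot_eventually_grows_at_most seq_step_grows_at_most_of_quot
      seq_step_grows_at_least_iff less_imp_le by blast
  then have "grows_at_most (nu_m m) (1 / b)" "grows_at_least (nu_m m) (1 / a)"
    using nu_grows_at_most_of_seq_step nu_grows_at_least_of_seq_step by auto
  then show "(\<exists>a. grows_at_most (nu_m m) a) \<and> (\<exists>b>0. grows_at_least (nu_m m) b)"
    using \<open>a > 0\<close> by (blast intro: divide_pos_pos zero_less_one)
qed

text \<open>Bounding each term \<open>ln (t / m j) \<le> ln (m N / m j)\<close> with \<open>N = \<nu>\<^sub>m(t)\<close> by the power bound
  leaves \<open>\<Sum>\<^sub>j\<^sub><\<^sub>N ln ((N + 1) / (j + 1)) \<le> N\<close>.\<close>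

lemma omegaM_le_nu_of_quot:
  assumes "quot_grows_at_most a" "a \<ge> 0"
  shows "\<exists>C>0. \<forall>t\<ge>m 0. omegaM M t \<le> C * nu_m m t"
proof -
  obtain C where "C > 0" and C: "\<And>k j. k \<le> j \<Longrightarrow> m j \<le> C * ((real j + 1) / (real k + 1)) powr a * m k"
    using assms(1) unfolding quot_grows_at_most_def by blast
  define C' where "C' = \<bar>ln C\<bar> + a + 1"
  have "omegaM M t \<le> C' * nu_m m t" if t: "t \<ge> m 0" for t
  proof -
    define N where "N = nu_nat t"
    have "t > 0" using t quot_pos[of 0] by linarith
    have term_le: "ln (t / m j) \<le> ln C + a * ln ((real N + 1) / (real j + 1))" if "j < N" for j
    proof -
      have "t / m j \<le> m N / m j"
        using quot_nu_nat_gt[of t] quot_pos[of j] unfolding N_def by (simp add: divide_right_mono)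
      also have "\<dots> \<le> C * ((real N + 1) / (real j + 1)) powr a"
        using C[of j N] that quot_pos[of j] by (simp add: divide_le_eq)
      finally have "ln (t / m j) \<le> ln (C * ((real N + 1) / (real j + 1)) powr a)"
        using \<open>t > 0\<close> quot_pos[of j] \<open>C > 0\<close> by (subst ln_le_cancel_iff) auto
      also have "\<dots> = ln C + a * ln ((real N + 1) / (real j + 1))"
        using \<open>C > 0\<close> by (simp add: ln_mult ln_powr)
      finally show ?thesis .
    qed
    have "omegaM M t = (\<Sum>j<N. ln (t / m j))" unfolding N_def by (rule omegaM_eq_sum[OF \<open>t > 0\<close>])
    also have "\<dots> \<le> (\<Sum>j<N. ln C + a * ln ((real N + 1) / (real j + 1)))"
      using term_le by (intro sum_mono) auto
    also have "\<dots> = real N * ln C + a * (\<Sum>j<N. ln ((real N + 1) / (real j + 1)))"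
      by (simp add: sum.distrib sum_distrib_left)
    also have "\<dots> \<le> real N * \<bar>ln C\<bar> + a * real N"
      using sum_ln_ratio_le[of N] assms(2) by (intro add_mono mult_left_mono) auto
    also have "\<dots> \<le> C' * real N" unfolding C'_def by (simp add: algebra_simps)
    finally show ?thesis unfolding nu_m_eq N_def .
  qed
  moreover have "C' > 0" unfolding C'_def using assms(2) by simp
  ultimately show ?thesis by blast
qed

lemma nu_le_omegaM_of_nu_grows:
  assumes "grows_at_most (nu_m m) a"
  shows "\<exists>C>0. eventually (\<lambda>t. nu_m m t \<le> C * omegaM M t) at_top"
proof -
  obtain C where "C > 0" and
    ev: "eventually (\<lambda>t. \<forall>l\<ge>1. nu_m m (l * t) \<le> C * l powr a * nu_m m t) at_top"
    using assms unfolding grows_at_most_def by blast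
  obtain t0 where "t0 > 0" and C: "\<And>t l. t \<ge> t0 \<Longrightarrow> l \<ge> 1 \<Longrightarrow>
      nu_m m (l * t) \<le> C * l powr a * nu_m m t"
    using ev by (rule eventually_at_top_positiveE) blast
  have "nu_m m t \<le> (C * exp 1 powr a) * omegaM M t" if t: "t \<ge> exp 1 * t0" for t
  proof -
    define s where "s = t / exp 1"
    have "s \<ge> t0" "exp 1 * s = t" unfolding s_def using t by (simp_all add: field_simps)
    then have "nu_m m t \<le> C * exp 1 powr a * nu_m m s" using C[of s "exp 1"] by simp
    also have "\<dots> \<le> C * exp 1 powr a * omegaM M t"
      using nu_m_le_omegaM[of s] \<open>s \<ge> t0\<close> \<open>t0 > 0\<close> \<open>exp 1 * s = t\<close> \<open>C > 0\<close>
      by (intro mult_left_mono) auto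
    finally show ?thesis .
  qed
  then have "eventually (\<lambda>t. nu_m m t \<le> (C * exp 1 powr a) * omegaM M t) at_top"
    unfolding eventually_at_top_linorder by blast
  moreover have "C * exp 1 powr a > 0" using \<open>C > 0\<close> by simp
  ultimately show ?thesis by blast
qed

lemma nu_bigtheta_omegaM_of_doubling_expanding:
  assumes "quot_doubling" "quot_expanding"
  shows "nu_m m \<in> \<Theta>(omegaM M)"
proof -
  obtain a where "a > 0" "quot_grows_at_most a" using doubling_imp_quot_grows_at_most assms(1) by blast
  then obtain C1 where "C1 > 0" and C1: "\<forall>t\<ge>m 0. omegaM M t \<le> C1 * nu_m m t"
    using omegaM_le_nu_of_quot less_imp_le by blast
  obtain a' where "grows_at_most (nu_m m) a'" using nu_growth_iff assms by blast
  then obtain C2 where "C2 > 0" and C2: "eventually (\<lambda>t. nu_m m t \<le> C2 * omegaM M t) at_top"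
    using nu_le_omegaM_of_nu_grows by blast
  have "eventually (\<lambda>t. 1 / C1 * omegaM M t \<le> nu_m m t \<and> nu_m m t \<le> C2 * omegaM M t) at_top"
    using C2 eventually_ge_at_top[of "m 0"]
    by eventually_elim (use C1 \<open>C1 > 0\<close> in \<open>auto simp: field_simps\<close>)
  moreover have "1 / C1 > 0" using \<open>C1 > 0\<close> by simp
  ultimately show ?thesis
    unfolding bigtheta_iff_bounds[OF eventually_nu_m_pos eventually_omegaM_pos]
    using \<open>C2 > 0\<close> by blast
qed

text \<open>If \<open>c \<omega>\<^sub>M \<le> \<nu>\<^sub>m\<close>, then \<open>\<omega>\<^sub>M(L t) \<ge> \<omega>\<^sub>M(t) + \<nu>\<^sub>m(t) / c \<ge> 2 \<omega>\<^sub>M(t)\<close> for \<open>L = e ^ (1 / c)\<close>.\<close>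

lemma omegaM_grows_at_least_of_bigtheta:
  assumes "nu_m m \<in> \<Theta>(omegaM M)"
  shows "\<exists>b>0. grows_at_least (omegaM M) b"
proof -
  obtain c C where "c > 0" "C > 0" and bounds: "eventually (\<lambda>t. c * omegaM M t \<le> nu_m m t \<and> nu_m m t \<le> C * omegaM M t) at_top"
    using assms bigtheta_iff_bounds[OF eventually_nu_m_pos eventually_omegaM_pos] by blast
  define L where "L = exp (1 / c)"
  define b where "b = c * ln 2"
  have "L > 1" "b > 0" using \<open>c > 0\<close> unfolding L_def b_def by simp_all
  have "L powr (- b) = 1 / 2" unfolding L_def b_def powr_def using \<open>c > 0\<close> by (simp add: exp_minus)
  have inv_pos: "eventually (\<lambda>t. inverse (omegaM M t) > 0) at_top"
    using eventually_omegaM_pos by eventually_elim simp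
  have "grows_at_most (\<lambda>t. inverse (omegaM M t)) (- b)"
  proof (rule grows_at_most_of_step[OF \<open>L > 1\<close> inv_pos])
    show "eventually (\<lambda>t. \<forall>l\<in>{1..L}. inverse (omegaM M (l * t)) \<le> 1 * inverse (omegaM M t)) at_top"
      using eventually_gt_at_top[of "m 0"]
    proof eventually_elim
      case (elim t)
      then have "0 < omegaM M t" "t > 0" using omegaM_pos quot_pos[of 0] by auto
      then show ?case using omegaM_mono[of t "l * t" for l] by (auto intro!: le_imp_inverse_le)
    qed
    show "eventually (\<lambda>t. inverse (omegaM M (L * t)) \<le> L powr (- b) * inverse (omegaM M t)) at_top"
      using bounds eventually_gt_at_top[of "m 0"]
    proof eventually_elim
      case (elim t)
      then have "t > 0" "omegaM M t > 0" using omegaM_pos quot_pos[of 0] by auto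
      have "2 * omegaM M t \<le> omegaM M t + nu_m m t * ln L"
        using elim \<open>c > 0\<close> unfolding L_def by (simp add: field_simps)
      also have "\<dots> \<le> omegaM M (L * t)" using omegaM_mult_ge[OF \<open>t > 0\<close>] \<open>L > 1\<close> by simp
      finally have "inverse (omegaM M (L * t)) \<le> inverse (2 * omegaM M t)"
        using \<open>omegaM M t > 0\<close> by (intro le_imp_inverse_le) auto
      then show ?case unfolding \<open>L powr (- b) = 1 / 2\<close> by (simp add: inverse_mult_distrib)
    qed
  qed
  then have "grows_at_least (omegaM M) b"
    using grows_at_least_iff_inverse[OF eventually_omegaM_pos] by simp
  then show ?thesis using \<open>b > 0\<close> by blast
qed

text \<open>If \<open>\<nu>\<^sub>m \<le> C \<omega>\<^sub>M\<close>, then \<open>\<omega>\<^sub>M(L t) \<le> \<omega>\<^sub>M(t) + \<nu>\<^sub>m(L t) / (2 C) \<le> \<omega>\<^sub>M(t) + \<omega>\<^sub>M(L t) / 2\<close>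
  for \<open>L = e ^ (1 / (2 C))\<close>.\<close>

lemma omegaM_grows_at_most_of_bigtheta:
  assumes "nu_m m \<in> \<Theta>(omegaM M)"
  shows "\<exists>a. grows_at_most (omegaM M) a"
proof -
  obtain c C where "c > 0" "C > 0" and bounds: "eventually (\<lambda>t. c * omegaM M t \<le> nu_m m t \<and> nu_m m t \<le> C * omegaM M t) at_top"
    using assms bigtheta_iff_bounds[OF eventually_nu_m_pos eventually_omegaM_pos] by blast
  define L where "L = exp (1 / (2 * C))"
  define a where "a = 2 * C * ln 2"
  have "L > 1" using \<open>C > 0\<close> unfolding L_def by simp
  have "L powr a = 2" unfolding L_def a_def powr_def using \<open>C > 0\<close> by simp
  obtain T where T': "\<And>t. t \<ge> T \<Longrightarrow> nu_m m t \<le> C * omegaM M t \<and> m 0 < t"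
    using eventually_conj[OF bounds eventually_gt_at_top[of "m 0"]]
    unfolding eventually_at_top_linorder by blast
  then have "T > m 0" and T: "\<And>t. t \<ge> T \<Longrightarrow> nu_m m t \<le> C * omegaM M t" by auto
  have step: "omegaM M (L * t) \<le> 2 * omegaM M t" if "t \<ge> T" for t
  proof -
    have "t > 0" using that \<open>T > m 0\<close> quot_pos[of 0] by linarith
    have "L * t \<ge> T" using that \<open>L > 1\<close> \<open>t > 0\<close> by (smt (verit) mult_le_cancel_right1)
    have "omegaM M (L * t) \<le> omegaM M t + nu_m m (L * t) * ln L"
      using omegaM_mult_le[OF \<open>t > 0\<close>] \<open>L > 1\<close> by simp
    also have "\<dots> \<le> omegaM M t + omegaM M (L * t) / 2"
      using T[OF \<open>L * t \<ge> T\<close>] \<open>C > 0\<close> unfolding L_def by (simp add: field_simps)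
    finally show ?thesis by simp
  qed
  have "grows_at_most (omegaM M) a"
  proof (rule grows_at_most_of_step[OF \<open>L > 1\<close> eventually_omegaM_pos])
    show "eventually (\<lambda>t. \<forall>l\<in>{1..L}. omegaM M (l * t) \<le> 2 * omegaM M t) at_top"
      unfolding eventually_at_top_linorder
    proof (intro exI[of _ T] allI impI ballI)
      fix t l assume "t \<ge> T" "l \<in> {1..L}"
      then have "t > 0" using \<open>T > m 0\<close> quot_pos[of 0] by linarith
      then have "omegaM M (l * t) \<le> omegaM M (L * t)" using \<open>l \<in> {1..L}\<close> by (intro omegaM_mono) auto
      also have "\<dots> \<le> 2 * omegaM M t" using step[OF \<open>t \<ge> T\<close>] .
      finally show "omegaM M (l * t) \<le> 2 * omegaM M t" .
    qed
    show "eventually (\<lambda>t. omegaM M (L * t) \<le> L powr a * omegaM M t) at_top"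
      unfolding \<open>L powr a = 2\<close> eventually_at_top_linorder using step by blast
  qed
  then show ?thesis by blast
qed

lemma nu_le_omegaM_of_omegaM_grows:
  assumes "grows_at_most (omegaM M) a"
  shows "\<exists>C>0. eventually (\<lambda>t. nu_m m t \<le> C * omegaM M t) at_top"
proof -
  obtain C where "C > 0" and
    up: "eventually (\<lambda>t. \<forall>l\<ge>1. omegaM M (l * t) \<le> C * l powr a * omegaM M t) at_top"
    using assms unfolding grows_at_most_def by blast
  have "eventually (\<lambda>t. nu_m m t \<le> (C * exp 1 powr a) * omegaM M t) at_top"
    using up eventually_gt_at_top[of 0]
  proof eventually_elim
    case (elim t)
    have "nu_m m t \<le> omegaM M (exp 1 * t)" using nu_m_le_omegaM \<open>t > 0\<close> by blast
    also have "\<dots> \<le> C * exp 1 powr a * omegaM M t" using elim by simp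
    finally show ?case .
  qed
  moreover have "C * exp 1 powr a > 0" using \<open>C > 0\<close> by simp
  ultimately show ?thesis by blast
qed

text \<open>With \<open>D L ^ b \<ge> 2\<close>: \<open>\<omega>\<^sub>M(t) \<le> \<omega>\<^sub>M(t / L) + \<nu>\<^sub>m(t) ln L \<le> \<omega>\<^sub>M(t) / 2 + \<nu>\<^sub>m(t) ln L\<close>.\<close>

lemma omegaM_le_nu_of_omegaM_grows:
  assumes "grows_at_least (omegaM M) b" "b > 0"
  shows "\<exists>c>0. eventually (\<lambda>t. c * omegaM M t \<le> nu_m m t) at_top"
proof -
  obtain D where "D > 0" and
    lo: "eventually (\<lambda>t. \<forall>l\<ge>1. D * l powr b * omegaM M t \<le> omegaM M (l * t)) at_top"
    using assms(1) unfolding grows_at_least_def by blast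
  obtain T where "T > 0" and T: "\<And>t l. t \<ge> T \<Longrightarrow> l \<ge> 1 \<Longrightarrow> D * l powr b * omegaM M t \<le> omegaM M (l * t)"
    using lo by (rule eventually_at_top_positiveE) blast
  define L where "L = (2 / D) powr (1 / b) + 1"
  have "L > 1" unfolding L_def using \<open>D > 0\<close> by simp
  have "2 / D = ((2 / D) powr (1 / b)) powr b" using \<open>D > 0\<close> \<open>b > 0\<close> by (simp add: powr_powr)
  also have "\<dots> \<le> L powr b" unfolding L_def using \<open>b > 0\<close> by (intro powr_mono2) auto
  finally have LD: "2 \<le> D * L powr b" using \<open>D > 0\<close> by (simp add: field_simps)
  have "1 / (2 * ln L) * omegaM M t \<le> nu_m m t" if t: "t \<ge> L * T" for t
  proof -
    define s where "s = t / L"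
    have "L * T > 0" using \<open>T > 0\<close> \<open>L > 1\<close> by simp
    then have "s \<ge> T" "s > 0" "L * s = t"
      unfolding s_def using t \<open>L > 1\<close> by (auto simp: field_simps)
    have "2 * omegaM M s \<le> D * L powr b * omegaM M s"
      using LD omegaM_nonneg[OF \<open>s > 0\<close>] by (simp add: mult_right_mono)
    also have "\<dots> \<le> omegaM M t" using T[OF \<open>s \<ge> T\<close>, of L] \<open>L > 1\<close> \<open>L * s = t\<close> by simp
    finally have "omegaM M s \<le> omegaM M t / 2" by simp
    moreover have "omegaM M t \<le> omegaM M s + nu_m m t * ln L"
      using omegaM_mult_le[OF \<open>s > 0\<close>, of L] \<open>L > 1\<close> \<open>L * s = t\<close> by simp
    ultimately have "omegaM M t \<le> 2 * ln L * nu_m m t" by (simp add: mult_ac)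
    then show ?thesis using \<open>L > 1\<close> by (simp add: field_simps)
  qed
  then have "eventually (\<lambda>t. 1 / (2 * ln L) * omegaM M t \<le> nu_m m t) at_top"
    unfolding eventually_at_top_linorder by blast
  moreover have "1 / (2 * ln L) > 0" using \<open>L > 1\<close> by simp
  ultimately show ?thesis by blast
qed

lemma nu_bigtheta_omegaM_of_growth:
  assumes "grows_at_most (omegaM M) a" "grows_at_least (omegaM M) b" "b > 0"
  shows "nu_m m \<in> \<Theta>(omegaM M)"
proof -
  obtain c where "c > 0" and lower: "eventually (\<lambda>t. c * omegaM M t \<le> nu_m m t) at_top"
    using omegaM_le_nu_of_omegaM_grows[OF assms(2,3)] by blast
  obtain C where "C > 0" and upper: "eventually (\<lambda>t. nu_m m t \<le> C * omegaM M t) at_top"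
    using nu_le_omegaM_of_omegaM_grows[OF assms(1)] by blast
  show ?thesis
    unfolding bigtheta_iff_bounds[OF eventually_nu_m_pos eventually_omegaM_pos]
    using \<open>c > 0\<close> \<open>C > 0\<close> eventually_conj[OF lower upper] by blast
qed

lemma nu_bigtheta_omegaM_iff: "nu_m m \<in> \<Theta>(omegaM M) \<longleftrightarrow> quot_doubling \<and> quot_expanding"
proof
  assume bigtheta: "nu_m m \<in> \<Theta>(omegaM M)"
  obtain a b where "grows_at_most (omegaM M) a" "b > 0" "grows_at_least (omegaM M) b"
    using omegaM_grows_at_most_of_bigtheta[OF bigtheta] omegaM_grows_at_least_of_bigtheta[OF bigtheta] by blast
  then have "grows_at_most (nu_m m) a" "grows_at_least (nu_m m) b"
    using grows_at_most_bigtheta[OF bigtheta eventually_nu_m_pos eventually_omegaM_pos]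
      grows_at_least_bigtheta[OF bigtheta eventually_nu_m_pos eventually_omegaM_pos] by blast+
  then show "quot_doubling \<and> quot_expanding" using nu_growth_iff \<open>b > 0\<close> by blast
qed (use nu_bigtheta_omegaM_of_doubling_expanding in blast)

lemma omegaM_growth_iff:
  "(\<exists>a. grows_at_most (omegaM M) a) \<and> (\<exists>b>0. grows_at_least (omegaM M) b) \<longleftrightarrow>
     quot_doubling \<and> quot_expanding"
  using nu_bigtheta_omegaM_iff nu_bigtheta_omegaM_of_growth
    omegaM_grows_at_most_of_bigtheta omegaM_grows_at_least_of_bigtheta by blast

lemma alpha_idx_nu_eq_inverse_beta_idx_seq_step:
  assumes quot_doubling quot_expanding
  shows "alpha_idx (nu_m m) = 1 / beta_idx (seq_step m)"
proof -
  obtain ag where "grows_at_most (seq_step m) ag" using seq_step_grows_at_most_iff assms by blast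
  obtain bg where "bg > 0" "grows_at_least (seq_step m) bg" using seq_step_grows_at_least_iff assms by blast
  obtain bnu where "bnu > 0" "grows_at_least (nu_m m) bnu" using nu_growth_iff assms by blast
  show ?thesis
    unfolding alpha_idx_eq_Inf[OF eventually_nu_m_pos] beta_idx_eq_Sup[OF eventually_seq_step_pos]
  proof (rule Inf_Sup_reciprocal(1))
    fix b assume "b \<in> {b. grows_at_least (seq_step m) b}" "b > 0"
    then show "1 / b \<in> {a. grows_at_most (nu_m m) a}" using nu_grows_at_most_of_seq_step by simp
  next
    fix a assume "a \<in> {a. grows_at_most (nu_m m) a}" "a > 0"
    then show "1 / a \<in> {b. grows_at_least (seq_step m) b}" using seq_step_grows_at_least_of_nu by simp
  next
    show "bg \<in> {b. grows_at_least (seq_step m) b}" "bg > 0"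
      using \<open>bg > 0\<close> \<open>grows_at_least (seq_step m) bg\<close> by auto
  next
    fix a assume "a \<in> {a. grows_at_most (nu_m m) a}"
    then have "bnu \<le> a"
      using grows_at_least_le_grows_at_most[OF eventually_nu_m_pos] \<open>grows_at_least (nu_m m) bnu\<close> by blast
    then show "a > 0" using \<open>bnu > 0\<close> by simp
  next
    fix b assume "b \<in> {b. grows_at_least (seq_step m) b}"
    then show "b \<le> ag"
      using grows_at_least_le_grows_at_most[OF eventually_seq_step_pos \<open>grows_at_most (seq_step m) ag\<close>] by blast
  qed
qed

lemma beta_idx_nu_eq_inverse_alpha_idx_seq_step:
  assumes quot_doubling quot_expanding
  shows "beta_idx (nu_m m) = 1 / alpha_idx (seq_step m)"
proof -
  obtain bg where "bg > 0" "grows_at_least (seq_step m) bg" using seq_step_grows_at_least_iff assms by blast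
  obtain anu bnu where "grows_at_most (nu_m m) anu" "bnu > 0" "grows_at_least (nu_m m) bnu"
    using nu_growth_iff assms by blast
  show ?thesis
    unfolding alpha_idx_eq_Inf[OF eventually_seq_step_pos] beta_idx_eq_Sup[OF eventually_nu_m_pos]
  proof (rule Inf_Sup_reciprocal(2))
    fix b assume "b \<in> {b. grows_at_least (nu_m m) b}" "b > 0"
    then show "1 / b \<in> {a. grows_at_most (seq_step m) a}" using seq_step_grows_at_most_of_nu by simp
  next
    fix a assume "a \<in> {a. grows_at_most (seq_step m) a}" "a > 0"
    then show "1 / a \<in> {b. grows_at_least (nu_m m) b}" using nu_grows_at_least_of_seq_step by simp
  next
    show "bnu \<in> {b. grows_at_least (nu_m m) b}" "bnu > 0"
      using \<open>bnu > 0\<close> \<open>grows_at_least (nu_m m) bnu\<close> by auto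
  next
    fix a assume "a \<in> {a. grows_at_most (seq_step m) a}"
    then have "bg \<le> a"
      using grows_at_least_le_grows_at_most[OF eventually_seq_step_pos] \<open>grows_at_least (seq_step m) bg\<close> by blast
    then show "a > 0" using \<open>bg > 0\<close> by simp
  next
    fix b assume "b \<in> {b. grows_at_least (nu_m m) b}"
    then show "b \<le> anu"
      using grows_at_least_le_grows_at_most[OF eventually_nu_m_pos \<open>grows_at_most (nu_m m) anu\<close>] by blast
  qed
qed

lemma index_identities:
  assumes quot_doubling quot_expanding
  shows "alpha_idx (omegaM M) = 1 / beta_idx (seq_step m)" "alpha_idx (nu_m m) = 1 / beta_idx (seq_step m)"
    "beta_idx (omegaM M) = 1 / alpha_idx (seq_step m)" "beta_idx (nu_m m) = 1 / alpha_idx (seq_step m)"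
proof -
  have "omegaM M \<in> \<Theta>(nu_m m)" using nu_bigtheta_omegaM_iff assms bigtheta_sym by blast
  then show "alpha_idx (omegaM M) = 1 / beta_idx (seq_step m)" "alpha_idx (nu_m m) = 1 / beta_idx (seq_step m)"
    "beta_idx (omegaM M) = 1 / alpha_idx (seq_step m)" "beta_idx (nu_m m) = 1 / alpha_idx (seq_step m)"
    using alpha_idx_bigtheta[OF _ eventually_omegaM_pos eventually_nu_m_pos]
      beta_idx_bigtheta[OF _ eventually_omegaM_pos eventually_nu_m_pos]
      alpha_idx_nu_eq_inverse_beta_idx_seq_step[OF assms] beta_idx_nu_eq_inverse_alpha_idx_seq_step[OF assms]
    by simp_all
qed

end

theorem corollary4p12:
  fixes M :: "nat \<Rightarrow> real"
  assumes "weight_seq M"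
  defines "m \<equiv> quot M"
  shows "(strongly_regular M \<longleftrightarrow>
           (\<exists>k::nat. k \<ge> 2 \<and>
              1 < Liminf sequentially (\<lambda>p. ereal (m (k * p) / m p)) \<and>
              Liminf sequentially (\<lambda>p. ereal (m (k * p) / m p))
                \<le> Limsup sequentially (\<lambda>p. ereal (m (k * p) / m p)) \<and>
              Limsup sequentially (\<lambda>p. ereal (m (k * p) / m p)) < \<infinity>))
       \<and> (strongly_regular M \<longleftrightarrow>
           alpha_idx (seq_step m) < \<infinity> \<and> beta_idx (seq_step m) > 0)
       \<and> (strongly_regular M \<longleftrightarrow> O_reg_var m \<and> beta_idx (seq_step m) > 0)
       \<and> (strongly_regular M \<longleftrightarrow>
           0 < Liminf at_top (\<lambda>t. ereal (nu_m m t / omegaM M t)) \<and>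
           Liminf at_top (\<lambda>t. ereal (nu_m m t / omegaM M t))
             \<le> Limsup at_top (\<lambda>t. ereal (nu_m m t / omegaM M t)) \<and>
           Limsup at_top (\<lambda>t. ereal (nu_m m t / omegaM M t)) < \<infinity>)
       \<and> (strongly_regular M \<longleftrightarrow>
           alpha_idx (nu_m m) < \<infinity> \<and> beta_idx (nu_m m) > 0)
       \<and> (strongly_regular M \<longleftrightarrow>
           alpha_idx (omegaM M) < \<infinity> \<and> beta_idx (omegaM M) > 0)
       \<and> (strongly_regular M \<longrightarrow>
           alpha_idx (omegaM M) = 1 / beta_idx (seq_step m) \<and>
           alpha_idx (nu_m m) = 1 / beta_idx (seq_step m) \<and>
           beta_idx (omegaM M) = 1 / alpha_idx (seq_step m) \<and>
           beta_idx (nu_m m) = 1 / alpha_idx (seq_step m))"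
proof -
  interpret weight_sequence M by unfold_locales (rule assms(1))
  note step_pos = eventually_seq_step_pos and nu_pos = eventually_nu_m_pos
    and omega_pos = eventually_omegaM_pos
  show ?thesis
    unfolding m_def strongly_regular_iff ratio_bounds_iff O_reg_var_iff_doubling
      bigtheta_iff_Liminf_Limsup[OF nu_pos omega_pos, symmetric] nu_bigtheta_omegaM_iff
      alpha_idx_finite_iff[OF step_pos] beta_idx_pos_iff[OF step_pos]
      seq_step_grows_at_most_iff seq_step_grows_at_least_iff
      alpha_idx_finite_iff[OF nu_pos] beta_idx_pos_iff[OF nu_pos] nu_growth_iff
      alpha_idx_finite_iff[OF omega_pos] beta_idx_pos_iff[OF omega_pos] omegaM_growth_iff
    using index_identities by blast
qed

end
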